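(* Let $K$ be a number field and $G\subseteq K^*$ a subgroup. Then there exists a unique subring $S\subseteq K$, minimal with respect to inclusion, such that for every finite non-empty subset $Y\subseteq G$ the $S$-submodule $SY$ of $K$ generated by $Y$ is an invertible ideal of $S$ within $K$. Moreover, this $S$ is an order.
   Context: For a subring $S$ of a field $K$, an invertible ideal of $S$ within $K$ is an $S$-submodule $I\subseteq K$ for which there exists an $S$-submodule $J\subseteq K$ with $IJ=S$ ($IJ$ the set of finite sums of products). An order is a domain whose additive group is isomorphic to $\mathbb{Z}^n$ for some $n\ge0$. *)

theory Defs
  imports Main "HOL.Rat"
begin

text \<open>The number field K is modelled as a type 'a of characteristic 0 which is
  finite-dimensional as a vector space over the rationals (embedded via of_rat).\<close>
definition number_field :: "'a::field_char_0 itself \<Rightarrow> bool" where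
  "number_field (T::'a itself) \<longleftrightarrow>
     (\<exists>B::'a set. finite B \<and> (\<forall>x::'a. \<exists>q. x = (\<Sum>b\<in>B. of_rat (q b) * b)))"

definition mult_subgroup :: "'a::field set \<Rightarrow> bool" where
  "mult_subgroup G \<longleftrightarrow> G \<subseteq> - {0} \<and> 1 \<in> G \<and>
     (\<forall>x\<in>G. \<forall>y\<in>G. x * y \<in> G) \<and> (\<forall>x\<in>G. inverse x \<in> G)"

definition is_subring :: "'a::field set \<Rightarrow> bool" where
  "is_subring S \<longleftrightarrow> 0 \<in> S \<and> 1 \<in> S \<and>
     (\<forall>x\<in>S. \<forall>y\<in>S. x + y \<in> S \<and> x * y \<in> S) \<and> (\<forall>x\<in>S. - x \<in> S)"

definition is_submodule :: "'a::field set \<Rightarrow> 'a set \<Rightarrow> bool" where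
  "is_submodule S I \<longleftrightarrow> 0 \<in> I \<and> (\<forall>x\<in>I. \<forall>y\<in>I. x + y \<in> I) \<and>
     (\<forall>s\<in>S. \<forall>x\<in>I. s * x \<in> I)"

definition gen_module :: "'a::field set \<Rightarrow> 'a set \<Rightarrow> 'a set" where
  "gen_module S Y = {\<Sum>y\<in>Y. s y * y | s. \<forall>y\<in>Y. s y \<in> S}"

definition ideal_mult :: "'a::field set \<Rightarrow> 'a set \<Rightarrow> 'a set" where
  "ideal_mult I J = {\<Sum>i<n. a i * b i | (n::nat) a b. \<forall>i<n. a i \<in> I \<and> b i \<in> J}"

definition invertible_ideal :: "'a::field set \<Rightarrow> 'a set \<Rightarrow> bool" where
  "invertible_ideal S I \<longleftrightarrow> is_submodule S I \<and>
     (\<exists>J. is_submodule S J \<and> ideal_mult I J = S)"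

text \<open>An order: a domain whose additive group is isomorphic to Z^n. A subring of a
  field is automatically a domain; the additive group is free abelian of rank n
  iff it has a Z-basis b_0..b_{n-1}.\<close>
definition is_order :: "'a::field set \<Rightarrow> bool" where
  "is_order S \<longleftrightarrow> is_subring S \<and>
     (\<exists>n b. (\<forall>i<n. b i \<in> S) \<and>
        (\<forall>x\<in>S. \<exists>!c::nat \<Rightarrow> int. (\<forall>i\<ge>n. c i = 0) \<and> x = (\<Sum>i<n. of_int (c i) * b i)))"

end

(* For nonzero g, the module S{1, g} is invertible exactly when 1 = b + (1 - b) with b, b g and
   (1 - b)/g in S; if this holds for every g in G, a partition of unity makes every S Y with
   Y a finite subset of G invertible.
   Given g, take a primitive relation a_0 + a_1 g + ... + a_n g^n = 0 with Bezout coefficients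
   e_0 a_0 + ... + e_n a_n = 1 and put v = sum_k e_k (a_0 + ... + a_(k-1) g^(k-1)) / g^k.
   Then v, v g and (1 + v)/g lie in the Z-spans of both g^0, ..., g^n and g^0, ..., g^-(n+1).
   The first fact makes them algebraic integers; both together put them into every ring S
   containing an element b as above (expand (b + (1 - b))^(2N)), and b = -v works for the ring
   they generate. So the ring generated by these elements over all g in G is the least ring
   with the required property, hence the unique minimal one. It consists of algebraic integers,
   which lie in a lattice by the trace dual basis argument, so it is an order. *)

theory Submission
  imports Defs "HOL.Vector_Spaces" "HOL-Computational_Algebra.Group_Closure" "HOL-Library.Set_Algebras"
begin

section \<open>Subrings and additive subgroups\<close>

lemma subring_zero: "is_subring S \<Longrightarrow> 0 \<in> S"
  and subring_one: "is_subring S \<Longrightarrow> 1 \<in> S"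
  and subring_add: "is_subring S \<Longrightarrow> x \<in> S \<Longrightarrow> y \<in> S \<Longrightarrow> x + y \<in> S"
  and subring_mult: "is_subring S \<Longrightarrow> x \<in> S \<Longrightarrow> y \<in> S \<Longrightarrow> x * y \<in> S"
  and subring_uminus: "is_subring S \<Longrightarrow> x \<in> S \<Longrightarrow> - x \<in> S"
  unfolding is_subring_def by blast+

lemma subring_diff: "is_subring S \<Longrightarrow> x \<in> S \<Longrightarrow> y \<in> S \<Longrightarrow> x - y \<in> S"
  using subring_add[of S x "- y"] subring_uminus[of S y] by simp

lemma subring_power: "is_subring S \<Longrightarrow> x \<in> S \<Longrightarrow> x ^ k \<in> S"
  by (induction k) (auto intro: subring_one subring_mult)

lemma subring_of_nat: "is_subring S \<Longrightarrow> of_nat k \<in> S"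
  by (induction k) (auto intro: subring_zero subring_one subring_add)

lemma subring_sum: "is_subring S \<Longrightarrow> (\<And>i. i \<in> A \<Longrightarrow> f i \<in> S) \<Longrightarrow> sum f A \<in> S"
  by (induction A rule: infinite_finite_induct) (auto intro: subring_zero subring_add)

lemma subring_Inter: "is_subring (\<Inter>{S. is_subring S \<and> X \<subseteq> S})"
  unfolding is_subring_def by auto

lemma group_closure_of_int_mult:
  fixes x :: "'a::comm_ring_1"
  assumes "x \<in> group_closure F"
  shows "of_int k * x \<in> group_closure F"
  using group_closure_scalar_mult_left[OF assms, of "nat \<bar>k\<bar>"] by (cases "k \<ge> 0") simp_all

lemma group_closure_sum_of_int:
  fixes u :: "'b \<Rightarrow> 'a::comm_ring_1"
  shows "finite A \<Longrightarrow> (\<And>i. i \<in> A \<Longrightarrow> u i \<in> group_closure F) \<Longrightarrow>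
    (\<Sum>i\<in>A. of_int (a i) * u i) \<in> group_closure F"
  by (induction A rule: finite_induct) (auto intro: group_closure_add group_closure_of_int_mult)

lemma group_closure_mono:
  assumes "F \<subseteq> F'"
  shows "group_closure F \<subseteq> group_closure F'"
proof
  fix x assume "x \<in> group_closure F"
  then show "x \<in> group_closure F'"
    using assms by induction (auto intro: group_closure.base group_closure.diff)
qed

lemma group_closure_times:
  fixes a b :: "'a::comm_ring_1"
  assumes "a \<in> group_closure A" and "b \<in> group_closure B"
  shows "a * b \<in> group_closure (A * B)"
proof -
  have left: "a * b \<in> group_closure (A * B)" if "b \<in> B" for b
    using assms(1)
  proof induction
    case (base s)
    then show ?case using that by (auto intro: group_closure.base set_times_intro)
  next
    case (diff s t)
    then show ?case by (simp add: left_diff_distrib group_closure.diff)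
  qed
  from assms(2) show ?thesis
    by induction (auto simp: right_diff_distrib intro: left group_closure.diff)
qed

lemma group_closure_mult_closed:
  fixes y :: "'a::comm_ring_1"
  assumes "\<And>f. f \<in> F \<Longrightarrow> y * f \<in> group_closure F" and "x \<in> group_closure F"
  shows "y * x \<in> group_closure F"
  using assms(2) by induction (auto simp: right_diff_distrib assms(1) intro: group_closure.diff)

lemma group_closure_int_image:
  fixes a :: "'b \<Rightarrow> int"
  assumes "x \<in> group_closure (a ` A)" and "finite A"
  shows "\<exists>e. x = (\<Sum>i\<in>A. e i * a i)"
  using assms(1)
proof induction
  case (base s)
  then consider "s = 0" | j where "j \<in> A" "s = a j" by auto
  then show ?case
  proof cases
    case 1
    then show ?thesis by (intro exI[of _ "\<lambda>_. 0"]) simp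
  next
    case 2
    have "(\<Sum>i\<in>A. (if i = j then 1 else 0) * a i) = (\<Sum>i\<in>A. if i = j then a j else 0)"
      by (rule sum.cong) auto
    then show ?thesis using 2 assms(2) by (intro exI[of _ "\<lambda>i. if i = j then 1 else 0"]) simp
  qed
next
  case (diff s t)
  then obtain e e' where "s = (\<Sum>i\<in>A. e i * a i)" "t = (\<Sum>i\<in>A. e' i * a i)" by blast
  then show ?case by (intro exI[of _ "\<lambda>i. e i - e' i"]) (simp add: left_diff_distrib sum_subtractf)
qed

definition add_subgroup :: "'a::ab_group_add set \<Rightarrow> bool" where
  "add_subgroup H \<longleftrightarrow> 0 \<in> H \<and> (\<forall>x\<in>H. \<forall>y\<in>H. x + y \<in> H) \<and> (\<forall>x\<in>H. - x \<in> H)"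

lemma add_subgroup_diff: "add_subgroup H \<Longrightarrow> x \<in> H \<Longrightarrow> y \<in> H \<Longrightarrow> x - y \<in> H"
  unfolding add_subgroup_def by (metis diff_conv_add_uminus)

lemma add_subgroup_group_closure_eq:
  assumes "add_subgroup H"
  shows "group_closure H = H"
proof
  show "group_closure H \<subseteq> H"
  proof
    fix x assume "x \<in> group_closure H"
    then show "x \<in> H"
      by induction (use assms in \<open>auto simp: add_subgroup_def intro: add_subgroup_diff\<close>)
  qed
qed (auto intro: group_closure.base)

lemma add_subgroup_group_closure: "add_subgroup (group_closure F)"
  unfolding add_subgroup_def by (auto intro: group_closure_add)

lemma subring_add_subgroup: "is_subring S \<Longrightarrow> add_subgroup S"
  unfolding add_subgroup_def is_subring_def by blast

lemma add_subgroup_of_int_mult: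
  fixes x :: "'a::comm_ring_1"
  assumes "add_subgroup H" and "x \<in> H"
  shows "of_int k * x \<in> H"
proof -
  have "x \<in> group_closure H" using assms(2) by (simp add: group_closure.base)
  then show ?thesis
    using group_closure_of_int_mult add_subgroup_group_closure_eq[OF assms(1)] by blast
qed

lemma int_add_subgroup_Gcd:
  fixes A :: "int set"
  assumes "add_subgroup A"
  shows "Gcd A \<in> A"
  using Gcd_in_group_closure[of A] add_subgroup_group_closure_eq[OF assms] by simp

lemma add_subgroup_kernel_image:
  fixes p :: "'a::ab_group_add \<Rightarrow> 'b::ab_group_add"
  assumes H: "add_subgroup H" and p_add: "\<And>x y. x \<in> H \<Longrightarrow> y \<in> H \<Longrightarrow> p (x + y) = p x + p y"
  shows "add_subgroup {x \<in> H. p x = 0}" and "add_subgroup (p ` H)"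
proof -
  have 0: "0 \<in> H" and add: "x \<in> H \<Longrightarrow> y \<in> H \<Longrightarrow> x + y \<in> H"
    and uminus: "x \<in> H \<Longrightarrow> - x \<in> H" for x y
    using H unfolding add_subgroup_def by blast+
  have p0: "p 0 = 0" using p_add[OF 0 0] by simp
  have p_uminus: "p (- x) = - p x" if "x \<in> H" for x
    using p_add[OF that uminus[OF that]] p0 by (simp add: eq_neg_iff_add_eq_0 add.commute)
  show "add_subgroup {x \<in> H. p x = 0}"
    unfolding add_subgroup_def using 0 p0 add p_add uminus p_uminus by auto
  show "add_subgroup (p ` H)"
    unfolding add_subgroup_def
  proof (intro conjI ballI)
    show "0 \<in> p ` H" using 0 p0 by force
  next
    fix a b assume "a \<in> p ` H" "b \<in> p ` H"
    then obtain x y where "x \<in> H" "y \<in> H" "a = p x" "b = p y" by blast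
    then show "a + b \<in> p ` H" using add p_add by (metis image_eqI)
  next
    fix a assume "a \<in> p ` H"
    then obtain x where "x \<in> H" "a = p x" by blast
    then show "- a \<in> p ` H" using uminus p_uminus by (metis image_eqI)
  qed
qed

section \<open>Free additive subgroups of lattices\<close>

definition int_comb :: "(nat \<Rightarrow> int) \<Rightarrow> (nat \<Rightarrow> 'a::ring_1) \<Rightarrow> nat \<Rightarrow> 'a" where
  "int_comb z e m = (\<Sum>i<m. of_int (z i) * e i)"

definition int_lattice :: "(nat \<Rightarrow> 'a::ring_1) \<Rightarrow> nat \<Rightarrow> 'a set" where
  "int_lattice e m = range (\<lambda>z. int_comb z e m)"

definition int_independent :: "(nat \<Rightarrow> 'a::ring_1) \<Rightarrow> nat \<Rightarrow> bool" where
  "int_independent e m \<longleftrightarrow> (\<forall>z. int_comb z e m = 0 \<longrightarrow> (\<forall>i<m. z i = 0))"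

definition int_basis :: "'a::ring_1 set \<Rightarrow> (nat \<Rightarrow> 'a) \<Rightarrow> nat \<Rightarrow> bool" where
  "int_basis H e m \<longleftrightarrow> (\<forall>i<m. e i \<in> H) \<and> int_independent e m \<and> H \<subseteq> int_lattice e m"

lemma int_comb_Suc: "int_comb z e (Suc m) = int_comb z e m + of_int (z m) * e m"
  unfolding int_comb_def by simp

lemma int_comb_add: "int_comb (\<lambda>i. z i + z' i) e m = int_comb z e m + int_comb z' e m"
  unfolding int_comb_def by (simp add: distrib_right sum.distrib)

lemma int_comb_diff: "int_comb (\<lambda>i. z i - z' i) e m = int_comb z e m - int_comb z' e m"
  unfolding int_comb_def by (simp add: left_diff_distrib sum_subtractf)

lemma int_comb_mult: "int_comb (\<lambda>i. t * z i) e m = of_int t * int_comb z e m"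
  unfolding int_comb_def by (simp add: sum_distrib_left mult.assoc)

lemma int_comb_divide:
  fixes e :: "nat \<Rightarrow> 'a::field"
  shows "int_comb z (\<lambda>i. e i / a) m = int_comb z e m / a"
  unfolding int_comb_def by (simp add: sum_divide_distrib)

lemma int_comb_cong:
  "(\<And>i. i < m \<Longrightarrow> z i = z' i) \<Longrightarrow> (\<And>i. i < m \<Longrightarrow> e i = e' i) \<Longrightarrow>
    int_comb z e m = int_comb z' e' m"
  unfolding int_comb_def by (rule sum.cong) auto

lemma int_comb_mem:
  fixes e :: "nat \<Rightarrow> 'a::comm_ring_1"
  assumes "add_subgroup H" and "\<And>i. i < m \<Longrightarrow> e i \<in> H"
  shows "int_comb z e m \<in> H"
  using assms(2)
proof (induction m)
  case 0
  then show ?case using assms(1) by (simp add: int_comb_def add_subgroup_def)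
next
  case (Suc m)
  have "of_int (z m) * e m \<in> H" using Suc.prems add_subgroup_of_int_mult[OF assms(1)] by simp
  then show ?case
    using Suc assms(1) unfolding add_subgroup_def by (simp add: int_comb_Suc)
qed

lemma add_subgroup_int_lattice: "add_subgroup (int_lattice e m)"
  unfolding add_subgroup_def int_lattice_def
proof (intro conjI ballI)
  show "0 \<in> range (\<lambda>z. int_comb z e m)" by (rule range_eqI[of _ _ "\<lambda>_. 0"]) (simp add: int_comb_def)
next
  fix x y assume "x \<in> range (\<lambda>z. int_comb z e m)" "y \<in> range (\<lambda>z. int_comb z e m)"
  then show "x + y \<in> range (\<lambda>z. int_comb z e m)" by (auto simp: int_comb_add[symmetric])
next
  fix x assume "x \<in> range (\<lambda>z. int_comb z e m)"
  then obtain z where "x = int_comb z e m" by blast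
  then have "- x = int_comb (\<lambda>i. - z i) e m" using int_comb_mult[of "-1" z e m] by simp
  then show "- x \<in> range (\<lambda>z. int_comb z e m)" by blast
qed

lemma int_independent_unique:
  assumes "int_independent e m" and "int_comb z e m = int_comb z' e m" and "i < m"
  shows "z i = z' i"
proof -
  have "int_comb (\<lambda>i. z i - z' i) e m = 0" using assms(2) by (simp add: int_comb_diff)
  then show ?thesis using assms(1,3) unfolding int_independent_def by fastforce
qed

lemma int_independent_coord:
  assumes "int_independent c m" and "i < m"
  obtains p where "\<And>z. p (int_comb z c m) = z i"
proof
  fix z
  have "\<exists>z'. int_comb z c m = int_comb z' c m" by blast
  then have "int_comb z c m = int_comb (SOME z'. int_comb z c m = int_comb z' c m) c m"
    by (rule someI_ex)
  then show "(SOME z'. int_comb z c m = int_comb z' c m) i = z i"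
    using int_independent_unique[OF assms(1) _ assms(2)] by metis
qed

lemma int_independent_Suc: "int_independent c (Suc n) \<Longrightarrow> int_independent c n"
  unfolding int_independent_def
proof (intro allI impI)
  fix z i
  assume indep: "\<forall>z. int_comb z c (Suc n) = 0 \<longrightarrow> (\<forall>i<Suc n. z i = 0)"
    and "int_comb z c n = 0" and "i < n"
  then have "int_comb (z(n := 0)) c (Suc n) = 0"
    by (simp add: int_comb_Suc int_comb_cong[of n "z(n := 0)" z c c])
  then show "z i = 0" using indep \<open>i < n\<close> by (metis fun_upd_apply less_SucI nat_neq_iff)
qed

lemma int_basis_extend:
  fixes p :: "'a::comm_ring_1 \<Rightarrow> int"
  assumes H: "add_subgroup H"
    and p_add: "\<And>x y. x \<in> H \<Longrightarrow> y \<in> H \<Longrightarrow> p (x + y) = p x + p y"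
    and p_mult: "\<And>t x. x \<in> H \<Longrightarrow> p (of_int t * x) = t * p x"
    and e: "int_basis {x \<in> H. p x = 0} e m"
    and h: "h \<in> H" "p h \<noteq> 0" "\<And>x. x \<in> H \<Longrightarrow> p h dvd p x"
  shows "int_basis H (e(m := h)) (Suc m)"
proof -
  let ?H0 = "{x \<in> H. p x = 0}"
  have p0: "p 0 = 0" using p_mult[OF h(1), of 0] by simp
  have "add_subgroup ?H0" by (rule add_subgroup_kernel_image(1)[OF H p_add])
  then have in_H0: "int_comb z e m \<in> ?H0" for z
    using e int_comb_mem unfolding int_basis_def by blast
  have comb: "int_comb z (e(m := h)) (Suc m) = int_comb z e m + of_int (z m) * h" for z
    by (simp add: int_comb_Suc int_comb_cong[of m z z "e(m := h)" e])
  have h_mult: "of_int t * h \<in> H" for t using add_subgroup_of_int_mult[OF H h(1)] .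
  have p_comb: "p (int_comb z (e(m := h)) (Suc m)) = z m * p h" for z
    using in_H0[of z] p_add[OF _ h_mult] p_mult[OF h(1)] unfolding comb by simp
  show ?thesis
    unfolding int_basis_def
  proof (intro conjI allI impI subsetI)
    show "(e(m := h)) i \<in> H" if "i < Suc m" for i
      using e h(1) that unfolding int_basis_def by (auto simp: less_Suc_eq)
  next
    show "int_independent (e(m := h)) (Suc m)"
      unfolding int_independent_def
    proof (intro allI impI)
      fix z i assume z: "int_comb z (e(m := h)) (Suc m) = 0" and i: "i < Suc m"
      then have zm: "z m = 0" using p_comb[of z] p0 h(2) by simp
      then have "int_comb z e m = 0" using z comb by simp
      then show "z i = 0"
        using e zm i unfolding int_basis_def int_independent_def by (auto simp: less_Suc_eq)
    qed
  next
    fix x assume x: "x \<in> H"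
    obtain t where t: "p x = t * p h" using h(3)[OF x] by (metis dvd_def mult.commute)
    have diff: "x - of_int t * h \<in> H" using add_subgroup_diff[OF H x h_mult] .
    have "p x = p (x - of_int t * h) + t * p h"
      using p_add[OF diff h_mult[of t]] p_mult[OF h(1), of t] by simp
    then have "x - of_int t * h \<in> ?H0" using diff t by simp
    then obtain z where z: "x - of_int t * h = int_comb z e m"
      using e unfolding int_basis_def int_lattice_def by blast
    have "x = int_comb (z(m := t)) (e(m := h)) (Suc m)"
      using z unfolding comb by (simp add: int_comb_cong[of m "z(m := t)" z e e] algebra_simps)
    then show "x \<in> int_lattice (e(m := h)) (Suc m)" unfolding int_lattice_def by blast
  qed
qed

lemma int_lattice_last_coord:
  fixes c :: "nat \<Rightarrow> 'a::comm_ring_1"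
  assumes "int_independent c (Suc n)"
  obtains p :: "'a \<Rightarrow> int"
  where "\<And>x y. x \<in> int_lattice c (Suc n) \<Longrightarrow> y \<in> int_lattice c (Suc n) \<Longrightarrow> p (x + y) = p x + p y"
    and "\<And>t x. x \<in> int_lattice c (Suc n) \<Longrightarrow> p (of_int t * x) = t * p x"
    and "\<And>x. x \<in> int_lattice c (Suc n) \<Longrightarrow> p x = 0 \<Longrightarrow> x \<in> int_lattice c n"
proof -
  obtain p where p: "\<And>z. p (int_comb z c (Suc n)) = z n"
    using int_independent_coord[OF assms] by blast
  show ?thesis
  proof (rule that[of p])
    fix x y assume "x \<in> int_lattice c (Suc n)" "y \<in> int_lattice c (Suc n)"
    then obtain z z' where "x = int_comb z c (Suc n)" "y = int_comb z' c (Suc n)"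
      unfolding int_lattice_def by blast
    then show "p (x + y) = p x + p y" by (simp add: int_comb_add[symmetric] p)
  next
    fix t x assume "x \<in> int_lattice c (Suc n)"
    then obtain z where "x = int_comb z c (Suc n)" unfolding int_lattice_def by blast
    then show "p (of_int t * x) = t * p x" by (simp add: int_comb_mult[symmetric] p)
  next
    fix x assume "x \<in> int_lattice c (Suc n)" "p x = 0"
    then obtain z where z: "x = int_comb z c (Suc n)" "z n = 0" unfolding int_lattice_def using p by auto
    then show "x \<in> int_lattice c n" by (simp add: int_comb_Suc int_lattice_def)
  qed
qed

lemma add_subgroup_int_basis:
  fixes c :: "nat \<Rightarrow> 'a::comm_ring_1"
  assumes "int_independent c n" and "add_subgroup H" and "H \<subseteq> int_lattice c n"
  shows "\<exists>m e. int_basis H e m"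
  using assms
proof (induction n arbitrary: H)
  case 0
  then have "H \<subseteq> {0}" by (auto simp: int_lattice_def int_comb_def)
  then have "int_basis H e 0" for e
    by (auto simp: int_basis_def int_independent_def int_lattice_def int_comb_def)
  then show ?case by blast
next
  case (Suc n)
  obtain p where p_add: "\<And>x y. x \<in> H \<Longrightarrow> y \<in> H \<Longrightarrow> p (x + y) = p x + p y"
    and p_mult: "\<And>t x. x \<in> H \<Longrightarrow> p (of_int t * x) = t * p x"
    and p_kernel: "\<And>x. x \<in> H \<Longrightarrow> p x = 0 \<Longrightarrow> x \<in> int_lattice c n"
    using int_lattice_last_coord[OF Suc.prems(1)] Suc.prems(3) by (metis subsetD)
  let ?H0 = "{x \<in> H. p x = 0}"
  have "add_subgroup ?H0" by (rule add_subgroup_kernel_image(1)[OF Suc.prems(2) p_add])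
  moreover have "?H0 \<subseteq> int_lattice c n" using p_kernel by blast
  ultimately obtain m e where e: "int_basis ?H0 e m"
    using Suc.IH int_independent_Suc[OF Suc.prems(1)] by blast
  show ?case
  proof (cases "p ` H \<subseteq> {0}")
    case True
    then have "?H0 = H" by blast
    then show ?thesis using e by metis
  next
    case False
    have "add_subgroup (p ` H)" by (rule add_subgroup_kernel_image(2)[OF Suc.prems(2) p_add])
    then have "Gcd (p ` H) \<in> p ` H" by (rule int_add_subgroup_Gcd)
    then obtain h where h: "h \<in> H" "p h = Gcd (p ` H)" by auto
    have "int_basis H (e(m := h)) (Suc m)"
    proof (rule int_basis_extend[OF Suc.prems(2) p_add p_mult e h(1)])
      show "p h \<noteq> 0" using False h(2) by simp
      show "p h dvd p x" if "x \<in> H" for x using that h(2) by simp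
    qed
    then show ?thesis by blast
  qed
qed

lemma scaled_add_subgroup_int_basis:
  fixes c :: "nat \<Rightarrow> 'a::field_char_0"
  assumes "int_independent c n" and "add_subgroup H" and "D \<noteq> 0"
    and "\<And>x. x \<in> H \<Longrightarrow> of_int D * x \<in> int_lattice c n"
  shows "\<exists>m e. int_basis H e m"
proof (rule add_subgroup_int_basis[OF _ assms(2)])
  have D: "(of_int D :: 'a) \<noteq> 0" using assms(3) by simp
  show "int_independent (\<lambda>i. c i / of_int D) n"
    using assms(1) D unfolding int_independent_def int_comb_divide by simp
  show "H \<subseteq> int_lattice (\<lambda>i. c i / of_int D) n"
  proof
    fix x assume "x \<in> H"
    then obtain z where "of_int D * x = int_comb z c n" using assms(4) unfolding int_lattice_def by blast
    then have "x = int_comb z (\<lambda>i. c i / of_int D) n" using D by (simp add: int_comb_divide field_simps)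
    then show "x \<in> int_lattice (\<lambda>i. c i / of_int D) n" unfolding int_lattice_def by blast
  qed
qed

lemma int_basis_is_order:
  assumes "is_subring S" and "int_basis S e m"
  shows "is_order S"
  unfolding is_order_def
proof (intro conjI exI[of _ m] exI[of _ e] ballI)
  show "is_subring S" "\<forall>i<m. e i \<in> S" using assms unfolding int_basis_def by blast+
  fix x assume "x \<in> S"
  then obtain z where z: "x = int_comb z e m" using assms(2) unfolding int_basis_def int_lattice_def by blast
  let ?z = "\<lambda>i. if i < m then z i else 0"
  have z': "x = int_comb ?z e m" using z by (simp add: int_comb_cong[of m ?z z e e])
  show "\<exists>!c. (\<forall>i\<ge>m. c i = 0) \<and> x = (\<Sum>i<m. of_int (c i) * e i)"
  proof (rule ex1I[of _ ?z])
    show "(\<forall>i\<ge>m. ?z i = 0) \<and> x = (\<Sum>i<m. of_int (?z i) * e i)"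
      using z' unfolding int_comb_def by simp
  next
    fix c assume c: "(\<forall>i\<ge>m. c i = 0) \<and> x = (\<Sum>i<m. of_int (c i) * e i)"
    then have "int_comb c e m = int_comb ?z e m" using z' unfolding int_comb_def by simp
    then have "c i = ?z i" if "i < m" for i
      using int_independent_unique assms(2) that unfolding int_basis_def by blast
    then show "c = ?z" using c by (auto simp: not_less)
  qed
qed

section \<open>Rational bases and the trace form\<close>

lemma rat_common_denominator: "finite (A::rat set) \<Longrightarrow> \<exists>D::int. D > 0 \<and> (\<forall>q\<in>A. of_int D * q \<in> \<int>)"
proof (induction rule: finite_induct)
  case empty show ?case by (intro exI[of _ 1]) auto
next
  case (insert a A)
  then obtain D where D: "D > 0" "\<forall>q\<in>A. of_int D * q \<in> \<int>" by blast
  obtain p d where pd: "quotient_of a = (p, d)" by (cases "quotient_of a")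
  have d: "d > 0" using quotient_of_denom_pos[OF pd] .
  have a: "a = of_int p / of_int d" using quotient_of_div[OF pd] .
  have "of_int (D * d) * a = of_int (D * p)" using a d by simp
  then have 1: "of_int (D * d) * a \<in> \<int>" by (metis Ints_of_int)
  have 2: "of_int (D * d) * q \<in> \<int>" if "q \<in> A" for q
  proof -
    have "of_int (D * d) * q = of_int d * (of_int D * q)" by simp
    then show ?thesis using D(2) that by (metis Ints_mult Ints_of_int)
  qed
  show ?case using 1 2 D(1) d by (intro exI[of _ "D * d"]) auto
qed

definition rat_comb :: "(nat \<Rightarrow> rat) \<Rightarrow> (nat \<Rightarrow> 'a::field_char_0) \<Rightarrow> nat \<Rightarrow> 'a" where
  "rat_comb q c n = (\<Sum>i<n. of_rat (q i) * c i)"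

definition rat_basis :: "(nat \<Rightarrow> 'a::field_char_0) \<Rightarrow> nat \<Rightarrow> bool" where
  "rat_basis c n \<longleftrightarrow> (\<forall>x. \<exists>q. x = rat_comb q c n) \<and> (\<forall>q. rat_comb q c n = 0 \<longrightarrow> (\<forall>i<n. q i = 0))"

definition rat_coord :: "(nat \<Rightarrow> 'a::field_char_0) \<Rightarrow> nat \<Rightarrow> 'a \<Rightarrow> nat \<Rightarrow> rat" where
  "rat_coord c n x = (SOME q. x = rat_comb q c n)"

lemma rat_comb_coord: "rat_basis c n \<Longrightarrow> x = rat_comb (rat_coord c n x) c n"
  unfolding rat_coord_def rat_basis_def by (metis (mono_tags) someI_ex)

lemma rat_comb_diff: "rat_comb (\<lambda>i. q i - q' i) c n = rat_comb q c n - rat_comb q' c n"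
  unfolding rat_comb_def by (simp add: of_rat_diff left_diff_distrib sum_subtractf)

lemma int_comb_eq_rat_comb: "int_comb z e m = rat_comb (\<lambda>i. of_int (z i)) e m"
  unfolding int_comb_def rat_comb_def by simp

lemma rat_basis_unique:
  assumes "rat_basis c n" and "rat_comb q c n = rat_comb q' c n" and "i < n"
  shows "q i = q' i"
proof -
  have "rat_comb (\<lambda>i. q i - q' i) c n = 0" using assms(2) by (simp add: rat_comb_diff)
  then show ?thesis using assms(1,3) unfolding rat_basis_def by fastforce
qed

lemma rat_coord_eq: "rat_basis c n \<Longrightarrow> x = rat_comb q c n \<Longrightarrow> i < n \<Longrightarrow> rat_coord c n x i = q i"
  using rat_basis_unique rat_comb_coord by metis

lemma rat_coord_sum:
  assumes c: "rat_basis c n" and "i < n" and "finite A"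
  shows "rat_coord c n (\<Sum>j\<in>A. of_rat (r j) * u j) i = (\<Sum>j\<in>A. r j * rat_coord c n (u j) i)"
proof (rule rat_coord_eq[OF c _ assms(2)])
  have "(\<Sum>j\<in>A. of_rat (r j) * u j) = (\<Sum>j\<in>A. of_rat (r j) * rat_comb (rat_coord c n (u j)) c n)"
    using rat_comb_coord[OF c] by simp
  also have "\<dots> = (\<Sum>l<n. \<Sum>j\<in>A. of_rat (r j * rat_coord c n (u j) l) * c l)"
    unfolding rat_comb_def by (simp add: sum_distrib_left of_rat_mult mult.assoc) (rule sum.swap)
  also have "\<dots> = rat_comb (\<lambda>l. \<Sum>j\<in>A. r j * rat_coord c n (u j) l) c n"
    unfolding rat_comb_def by (simp add: of_rat_sum sum_distrib_right)
  finally show "(\<Sum>j\<in>A. of_rat (r j) * u j) = rat_comb (\<lambda>l. \<Sum>j\<in>A. r j * rat_coord c n (u j) l) c n" .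
qed

lemma rat_coord_basis:
  assumes "rat_basis c n" and "i < n" and "j < n"
  shows "rat_coord c n (c j) i = (if i = j then 1 else 0)"
proof (rule rat_coord_eq[OF assms(1) _ assms(2)])
  show "c j = rat_comb (\<lambda>i. if i = j then 1 else 0) c n"
    unfolding rat_comb_def using assms(3) by (simp add: if_distrib[of "\<lambda>q. of_rat q * _"] cong: if_cong)
qed

lemma rat_coord_int_comb: "rat_basis c n \<Longrightarrow> i < n \<Longrightarrow> rat_coord c n (int_comb z c n) i = of_int (z i)"
  by (simp add: rat_coord_eq int_comb_eq_rat_comb)

lemma rat_basis_pos:
  assumes "rat_basis (c :: nat \<Rightarrow> 'a::field_char_0) n"
  shows "n > 0"
proof (rule ccontr)
  obtain q where "(1::'a) = rat_comb q c n" using assms unfolding rat_basis_def by blast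
  then show "\<not> n > 0 \<Longrightarrow> False" by (simp add: rat_comb_def)
qed

lemma rat_basis_int_independent:
  assumes "rat_basis c n"
  shows "int_independent c n"
  unfolding int_independent_def
proof (intro allI impI)
  fix z i assume "int_comb z c n = 0" and "i < n"
  then have "rat_comb (\<lambda>i. of_int (z i)) c n = rat_comb (\<lambda>_. 0) c n"
    by (simp add: int_comb_eq_rat_comb rat_comb_def)
  then show "z i = 0" using rat_basis_unique[OF assms] \<open>i < n\<close> by fastforce
qed

lemma rat_basis_of_int_basis:
  assumes c: "rat_basis c n" and e: "int_independent e m" and lattice: "\<And>i. i < n \<Longrightarrow> c i \<in> int_lattice e m"
  shows "rat_basis e m"
  unfolding rat_basis_def
proof (intro conjI allI impI)
  fix x
  have "\<forall>i. \<exists>z. i < n \<longrightarrow> c i = int_comb z e m" using lattice unfolding int_lattice_def by blast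
  then obtain Z where Z: "\<And>i. i < n \<Longrightarrow> c i = int_comb (Z i) e m" by metis
  obtain q where q: "x = rat_comb q c n" using c rat_basis_def by blast
  have "x = (\<Sum>i<n. of_rat (q i) * (\<Sum>l<m. of_int (Z i l) * e l))"
    unfolding q rat_comb_def by (rule sum.cong) (auto simp: Z int_comb_def)
  also have "\<dots> = rat_comb (\<lambda>l. \<Sum>i<n. q i * of_int (Z i l)) e m"
    unfolding rat_comb_def
    by (simp add: sum_distrib_left sum_distrib_right of_rat_sum of_rat_mult mult.assoc) (rule sum.swap)
  finally show "\<exists>q. x = rat_comb q e m" by blast
next
  fix q i assume q: "rat_comb q e m = 0" and i: "i < m"
  obtain D where D: "D > 0" "\<forall>r\<in>q ` {..<m}. of_int D * r \<in> \<int>"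
    using rat_common_denominator[of "q ` {..<m}"] by blast
  have "\<forall>l. \<exists>w. l < m \<longrightarrow> of_int D * q l = of_int w" using D(2) by (auto simp: Ints_def)
  then obtain W where W: "\<And>l. l < m \<Longrightarrow> of_int D * q l = of_int (W l)" by metis
  have W': "(of_int (W l) :: 'a) = of_int D * of_rat (q l)" if "l < m" for l
    using arg_cong[OF W[OF that], of "of_rat :: rat \<Rightarrow> 'a"] by (simp add: of_rat_mult)
  have "int_comb W e m = of_int D * rat_comb q e m"
    unfolding int_comb_def rat_comb_def sum_distrib_left
    by (rule sum.cong[OF refl]) (simp add: W' mult.assoc)
  then have "W i = 0" using e i q unfolding int_independent_def by auto
  then show "q i = 0" using W[OF i] D(1) by simp
qed

interpretation rat_vs: vector_space "\<lambda>(r::rat) (x::'a::field_char_0). of_rat r * x"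
  by unfold_locales (simp_all add: distrib_left distrib_right of_rat_add of_rat_mult mult.assoc)

lemma rat_basis_span: "rat_basis c n \<Longrightarrow> rat_vs.span (c ` {..<n}) = UNIV"
proof -
  assume c: "rat_basis c n"
  have "x \<in> rat_vs.span (c ` {..<n})" for x
  proof -
    obtain q where "x = rat_comb q c n" using c unfolding rat_basis_def by blast
    then show ?thesis
      unfolding rat_comb_def by (simp only:, intro rat_vs.span_sum rat_vs.span_scale rat_vs.span_base) auto
  qed
  then show ?thesis by auto
qed

lemma rat_basis_dependent:
  fixes c :: "nat \<Rightarrow> 'a::field_char_0"
  assumes "rat_basis c n"
  shows "\<exists>q. (\<exists>i\<le>n. q i \<noteq> 0) \<and> (\<Sum>i\<le>n. of_rat (q i) * u i) = (0::'a)"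
proof (cases "inj_on u {..n}")
  case True
  let ?U = "u ` {..n}"
  have "\<not> rat_vs.independent ?U"
  proof
    assume "rat_vs.independent ?U"
    then have "card ?U \<le> card (c ` {..<n})"
      using rat_vs.independent_span_bound[of "c ` {..<n}" ?U] rat_basis_span[OF assms] by auto
    moreover have "card ?U = Suc n" using True by (simp add: card_image)
    moreover have "card (c ` {..<n}) \<le> n" using card_image_le[of "{..<n}" c] by simp
    ultimately show False by simp
  qed
  then obtain w where w: "\<exists>v\<in>?U. w v \<noteq> 0" "(\<Sum>v\<in>?U. of_rat (w v) * v) = 0"
    using rat_vs.dependent_finite[of ?U] by auto
  have "(\<Sum>i\<le>n. of_rat (w (u i)) * u i) = 0"
    using w(2) sum.reindex[OF True, of "\<lambda>v. of_rat (w v) * v"] by simp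
  then show ?thesis using w(1) by (intro exI[of _ "\<lambda>i. w (u i)"]) auto
next
  case False
  then obtain i j where ij: "i \<le> n" "j \<le> n" "i \<noteq> j" "u i = u j" unfolding inj_on_def by auto
  let ?q = "\<lambda>k. (if k = i then 1 else 0) - (if k = j then 1 else 0) :: rat"
  have e: "of_rat (?q k) * u k = (if k = i then u i else 0) - (if k = j then u j else 0)" for k
    using ij by auto
  have "(\<Sum>k\<le>n. of_rat (?q k) * u k) = 0"
    unfolding e sum_subtractf using ij by (simp only: sum.delta) simp
  moreover have "\<exists>i'\<le>n. ?q i' \<noteq> 0" using ij by (intro exI[of _ i]) simp
  ultimately show ?thesis by (intro exI[of _ ?q] conjI)
qed

lemma number_field_rat_basis:
  assumes "number_field TYPE('a::field_char_0)"
  obtains c :: "nat \<Rightarrow> 'a::field_char_0" and n where "rat_basis c n"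
proof -
  obtain B :: "'a set" where B: "finite B" "\<forall>x. \<exists>q. x = (\<Sum>b\<in>B. of_rat (q b) * b)"
    using assms unfolding number_field_def by blast
  have span_B: "x \<in> rat_vs.span B" for x
  proof -
    obtain q where "x = (\<Sum>b\<in>B. of_rat (q b) * b)" using B(2) by blast
    then show ?thesis by (simp only:, intro rat_vs.span_sum rat_vs.span_scale rat_vs.span_base) auto
  qed
  obtain C where C: "C \<subseteq> B" "rat_vs.independent C" "B \<subseteq> rat_vs.span C"
    using rat_vs.maximal_independent_subset[of B] by blast
  have span_C: "x \<in> rat_vs.span C" for x
    using span_B rat_vs.span_mono[OF C(3)] rat_vs.span_span by blast
  have fin: "finite C" using C(1) B(1) finite_subset by blast
  obtain h where h: "bij_betw h {..<card C} C"
    using ex_bij_betw_nat_finite[OF fin] by (auto simp: atLeast0LessThan)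
  have reindex: "(\<Sum>v\<in>C. of_rat (w v) * v) = (\<Sum>i<card C. of_rat (w (h i)) * h i)" for w
    using sum.reindex_bij_betw[OF h, of "\<lambda>v. of_rat (w v) * v"] by simp
  have "rat_basis h (card C)"
    unfolding rat_basis_def
  proof (intro conjI allI impI)
    fix x
    obtain w where "x = (\<Sum>v\<in>C. of_rat (w v) * v)" using span_C[of x] rat_vs.span_finite[OF fin] by auto
    then show "\<exists>q. x = rat_comb q h (card C)"
      unfolding reindex rat_comb_def by (intro exI[of _ "\<lambda>i. w (h i)"])
  next
    fix q i assume q: "rat_comb q h (card C) = 0" and i: "i < card C"
    define w where "w v = q (inv_into {..<card C} h v)" for v
    have "(\<Sum>v\<in>C. of_rat (w v) * v) = rat_comb q h (card C)"
      unfolding reindex rat_comb_def w_def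
      by (rule sum.cong[OF refl]) (use bij_betw_inv_into_left[OF h] in simp)
    then have "(\<Sum>v\<in>C. of_rat (w v) * v) = 0" using q by simp
    moreover have "h i \<in> C" using h i bij_betwE by blast
    ultimately have "w (h i) = 0" using rat_vs.independentD[OF C(2) fin subset_refl] by blast
    then show "q i = 0" unfolding w_def using bij_betw_inv_into_left[OF h] i by simp
  qed
  then show ?thesis by (rule that)
qed

lemma rat_linear_sum:
  fixes f :: "'a::field_char_0 \<Rightarrow> 'b::field_char_0"
  assumes add: "\<And>x y. f (x + y) = f x + f y" and scale: "\<And>r x. f (of_rat r * x) = of_rat r * f x"
  shows "f (\<Sum>i\<in>A. of_rat (q i) * u i) = (\<Sum>i\<in>A. of_rat (q i) * f (u i))"
  using scale[of 0 0] by (induction A rule: infinite_finite_induct) (simp_all add: add scale)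

lemma rat_linear_inj_imp_surj:
  fixes f :: "'a::field_char_0 \<Rightarrow> 'a" and c :: "nat \<Rightarrow> 'a"
  assumes c: "rat_basis c n"
    and add: "\<And>x y. f (x + y) = f x + f y" and scale: "\<And>r x. f (of_rat r * x) = of_rat r * f x"
    and inj: "\<And>x. f x = 0 \<Longrightarrow> x = 0"
  shows "\<exists>x. f x = t"
proof -
  have f_comb: "f (rat_comb q c n) = (\<Sum>i<n. of_rat (q i) * f (c i))" for q
    unfolding rat_comb_def by (rule rat_linear_sum[OF add scale])
  obtain q where q: "\<exists>i\<le>n. q i \<noteq> 0" "(\<Sum>i\<le>n. of_rat (q i) * (if i < n then f (c i) else t)) = 0"
    using rat_basis_dependent[OF c, of "\<lambda>i. if i < n then f (c i) else t"] by blast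
  have "(\<Sum>i\<le>n. of_rat (q i) * (if i < n then f (c i) else t)) =
      (\<Sum>i<n. of_rat (q i) * f (c i)) + of_rat (q n) * t"
    unfolding lessThan_Suc_atMost[symmetric] sum.lessThan_Suc by simp
  then have sum_eq: "(\<Sum>i<n. of_rat (q i) * f (c i)) = - (of_rat (q n) * t)"
    using q(2) by (simp add: add_eq_0_iff)
  show ?thesis
  proof (cases "q n = 0")
    case True
    then have "rat_comb q c n = 0" using sum_eq f_comb inj by simp
    then have "\<forall>i<n. q i = 0" using c unfolding rat_basis_def by blast
    then show ?thesis using q(1) True by (metis le_neq_implies_less)
  next
    case False
    have "f (rat_comb (\<lambda>i. - q i / q n) c n) = - (1 / of_rat (q n)) * (\<Sum>i<n. of_rat (q i) * f (c i))"
      unfolding f_comb by (simp add: sum_distrib_left of_rat_divide of_rat_minus)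
    also have "\<dots> = t" using sum_eq False by simp
    finally show ?thesis by blast
  qed
qed

lemma rat_basis_int_coords:
  assumes c: "rat_basis c n" and coords: "\<And>i. i < n \<Longrightarrow> rat_coord c n x i \<in> \<int>"
  shows "x \<in> int_lattice c n"
proof -
  have "\<forall>i. \<exists>w. i < n \<longrightarrow> rat_coord c n x i = of_int w" using coords by (auto simp: Ints_def)
  then obtain z where z: "\<And>i. i < n \<Longrightarrow> rat_coord c n x i = of_int (z i)" by metis
  have "x = rat_comb (rat_coord c n x) c n" by (rule rat_comb_coord[OF c])
  also have "\<dots> = int_comb z c n"
    unfolding int_comb_def rat_comb_def by (rule sum.cong) (simp_all add: z)
  finally show ?thesis unfolding int_lattice_def by blast
qed

lemma rat_basis_scaled_into_lattice:
  assumes c: "rat_basis c n" and F: "finite F"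
  obtains D :: int where "D > 0" and "\<And>f. f \<in> F \<Longrightarrow> of_int D * f \<in> int_lattice c n"
proof -
  obtain D where D: "D > 0" "\<forall>q\<in>(\<lambda>(f, k). rat_coord c n f k) ` (F \<times> {..<n}). of_int D * q \<in> \<int>"
    using rat_common_denominator[of "(\<lambda>(f, k). rat_coord c n f k) ` (F \<times> {..<n})"] F by blast
  have "of_int D * f \<in> int_lattice c n" if f: "f \<in> F" for f
  proof (rule rat_basis_int_coords[OF c])
    fix i assume i: "i < n"
    have "rat_coord c n (of_rat (of_int D) * f) i = of_int D * rat_coord c n f i"
      using rat_coord_sum[OF c i, of "{()}" "\<lambda>_. of_int D" "\<lambda>_. f"] by simp
    moreover have "of_int D * rat_coord c n f i \<in> \<int>" using D(2) f i by blast
    ultimately show "rat_coord c n (of_int D * f) i \<in> \<int>" by simp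
  qed
  then show ?thesis using D(1) that by blast
qed

definition trace_wrt :: "(nat \<Rightarrow> 'a::field_char_0) \<Rightarrow> nat \<Rightarrow> 'a \<Rightarrow> rat" where
  "trace_wrt c n y = (\<Sum>i<n. rat_coord c n (y * c i) i)"

lemma trace_wrt_sum:
  assumes "rat_basis c n" and "finite A"
  shows "trace_wrt c n (\<Sum>j\<in>A. of_rat (r j) * u j) = (\<Sum>j\<in>A. r j * trace_wrt c n (u j))"
proof -
  have "trace_wrt c n (\<Sum>j\<in>A. of_rat (r j) * u j) =
      (\<Sum>i<n. rat_coord c n (\<Sum>j\<in>A. of_rat (r j) * (u j * c i)) i)"
    unfolding trace_wrt_def by (simp add: sum_distrib_right mult.assoc)
  also have "\<dots> = (\<Sum>i<n. \<Sum>j\<in>A. r j * rat_coord c n (u j * c i) i)"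
    by (rule sum.cong[OF refl]) (rule rat_coord_sum[OF assms(1) _ assms(2)], auto)
  also have "\<dots> = (\<Sum>j\<in>A. r j * trace_wrt c n (u j))"
    unfolding trace_wrt_def by (subst sum.swap) (simp add: sum_distrib_left)
  finally show ?thesis .
qed

lemma trace_wrt_add: "rat_basis c n \<Longrightarrow> trace_wrt c n (x + y) = trace_wrt c n x + trace_wrt c n y"
  using trace_wrt_sum[of c n "{True, False}" "\<lambda>_. 1" "\<lambda>b. if b then x else y"] by simp

lemma trace_wrt_scale: "rat_basis c n \<Longrightarrow> trace_wrt c n (of_rat r * x) = r * trace_wrt c n x"
  using trace_wrt_sum[of c n "{()}" "\<lambda>_. r" "\<lambda>_. x"] by simp

lemma trace_wrt_one: "rat_basis c n \<Longrightarrow> trace_wrt c n 1 = of_nat n"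
  unfolding trace_wrt_def by (simp add: rat_coord_basis)

lemma trace_wrt_basis_indep:
  assumes c: "rat_basis c n" and e: "rat_basis e m"
  shows "trace_wrt c n y = trace_wrt e m y"
proof -
  have "trace_wrt c n y = (\<Sum>i<n. rat_coord c n (\<Sum>l<m. of_rat (rat_coord e m (c i) l) * (y * e l)) i)"
    unfolding trace_wrt_def
  proof (rule sum.cong[OF refl])
    fix i
    have "y * c i = y * rat_comb (rat_coord e m (c i)) e m" using rat_comb_coord[OF e] by metis
    then show "rat_coord c n (y * c i) i = rat_coord c n (\<Sum>l<m. of_rat (rat_coord e m (c i) l) * (y * e l)) i"
      unfolding rat_comb_def by (simp add: sum_distrib_left mult.left_commute)
  qed
  also have "\<dots> = (\<Sum>i<n. \<Sum>l<m. rat_coord e m (c i) l * rat_coord c n (y * e l) i)"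
    by (rule sum.cong[OF refl]) (rule rat_coord_sum[OF c], auto)
  also have "\<dots> = (\<Sum>l<m. \<Sum>i<n. rat_coord c n (y * e l) i * rat_coord e m (c i) l)"
    by (subst sum.swap) (simp add: mult.commute)
  also have "\<dots> = (\<Sum>l<m. rat_coord e m (\<Sum>i<n. of_rat (rat_coord c n (y * e l) i) * c i) l)"
    by (rule sum.cong[OF refl], rule rat_coord_sum[OF e, symmetric]) auto
  also have "\<dots> = trace_wrt e m y"
    unfolding trace_wrt_def using rat_comb_coord[OF c] by (simp add: rat_comb_def)
  finally show ?thesis .
qed

lemma trace_wrt_nondegenerate:
  assumes c: "rat_basis c n" and x: "x \<noteq> 0"
  shows "\<exists>j<n. trace_wrt c n (x * c j) \<noteq> 0"
proof (rule ccontr)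
  assume all0: "\<not> (\<exists>j<n. trace_wrt c n (x * c j) \<noteq> 0)"
  obtain r where r: "inverse x = rat_comb r c n" using c unfolding rat_basis_def by blast
  have "1 = x * inverse x" using x by simp
  also have "\<dots> = (\<Sum>j<n. of_rat (r j) * (x * c j))"
    unfolding r rat_comb_def by (simp add: sum_distrib_left mult.left_commute)
  finally have "trace_wrt c n 1 = (\<Sum>j<n. r j * trace_wrt c n (x * c j))"
    using trace_wrt_sum[OF c, of "{..<n}" r "\<lambda>j. x * c j"] by simp
  also have "\<dots> = 0" using all0 by simp
  finally show False using trace_wrt_one[OF c] rat_basis_pos[OF c] by simp
qed

lemma trace_dual_basis:
  fixes c :: "nat \<Rightarrow> 'a::field_char_0"
  assumes c: "rat_basis c n"
  obtains d where "\<And>x. x = (\<Sum>l<n. of_rat (trace_wrt c n (x * c l)) * d l)"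
proof -
  define \<psi> where "\<psi> x = rat_comb (\<lambda>j. trace_wrt c n (x * c j)) c n" for x
  have \<psi>_add: "\<psi> (x + y) = \<psi> x + \<psi> y" for x y
    unfolding \<psi>_def rat_comb_def by (simp add: distrib_right trace_wrt_add[OF c] of_rat_add sum.distrib)
  have \<psi>_scale: "\<psi> (of_rat r * x) = of_rat r * \<psi> x" for r x
  proof -
    have "trace_wrt c n (of_rat r * x * c j) = r * trace_wrt c n (x * c j)" for j
      using trace_wrt_scale[OF c, of r "x * c j"] by (simp only: mult.assoc)
    then show ?thesis
      unfolding \<psi>_def rat_comb_def sum_distrib_left by (simp only: of_rat_mult mult.assoc)
  qed
  have \<psi>_inj: "x = 0" if "\<psi> x = 0" for x
  proof (rule ccontr)
    assume "x \<noteq> 0"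
    then obtain j where j: "j < n" "trace_wrt c n (x * c j) \<noteq> 0"
      using trace_wrt_nondegenerate[OF c] by blast
    have "\<psi> x = rat_comb (\<lambda>_. 0) c n" using that by (simp add: rat_comb_def)
    then show False using rat_basis_unique[OF c _ j(1)] j(2) unfolding \<psi>_def by blast
  qed
  have "\<forall>l. \<exists>x. \<psi> x = c l" using rat_linear_inj_imp_surj[OF c \<psi>_add \<psi>_scale \<psi>_inj] by blast
  then obtain d where d: "\<And>l. \<psi> (d l) = c l" by metis
  have "x = (\<Sum>l<n. of_rat (trace_wrt c n (x * c l)) * d l)" for x
  proof -
    have "\<psi> (\<Sum>l<n. of_rat (trace_wrt c n (x * c l)) * d l) =
        (\<Sum>l<n. of_rat (trace_wrt c n (x * c l)) * \<psi> (d l))"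
      by (rule rat_linear_sum[OF \<psi>_add \<psi>_scale])
    also have "\<dots> = (\<Sum>l<n. of_rat (trace_wrt c n (x * c l)) * c l)" by (simp only: d)
    also have "\<dots> = \<psi> x" unfolding \<psi>_def rat_comb_def ..
    finally have "\<psi> (\<Sum>l<n. of_rat (trace_wrt c n (x * c l)) * d l) = \<psi> x" .
    then have "\<psi> (x - (\<Sum>l<n. of_rat (trace_wrt c n (x * c l)) * d l)) = 0"
      using \<psi>_add[of x "- (\<Sum>l<n. of_rat (trace_wrt c n (x * c l)) * d l)"] \<psi>_scale[of "-1"] by simp
    then show ?thesis using \<psi>_inj[of "x - (\<Sum>l<n. of_rat (trace_wrt c n (x * c l)) * d l)"] by simp
  qed
  then show ?thesis by (rule that)
qed

lemma trace_dual_bound: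
  fixes c :: "nat \<Rightarrow> 'a::field_char_0"
  assumes c: "rat_basis c n"
  obtains D :: int where "D > 0"
    and "\<And>x. (\<And>j. j < n \<Longrightarrow> trace_wrt c n (x * c j) \<in> \<int>) \<Longrightarrow> of_int D * x \<in> int_lattice c n"
proof -
  obtain d where d: "\<And>x. x = (\<Sum>l<n. of_rat (trace_wrt c n (x * c l)) * d l)"
    by (rule trace_dual_basis[OF c]) blast
  obtain D where D: "D > 0" "\<And>f. f \<in> d ` {..<n} \<Longrightarrow> of_int D * f \<in> int_lattice c n"
    by (rule rat_basis_scaled_into_lattice[OF c, of "d ` {..<n}"]) blast+
  have "of_int D * x \<in> int_lattice c n" if int: "\<And>j. j < n \<Longrightarrow> trace_wrt c n (x * c j) \<in> \<int>" for x
  proof -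
    have "\<forall>l. \<exists>w. l < n \<longrightarrow> trace_wrt c n (x * c l) = of_int w" using int by (auto simp: Ints_def)
    then obtain T where T: "\<And>l. l < n \<Longrightarrow> trace_wrt c n (x * c l) = of_int (T l)" by metis
    have "of_int D * x = of_int D * (\<Sum>l<n. of_rat (trace_wrt c n (x * c l)) * d l)"
      using d[of x] by (rule arg_cong)
    also have "\<dots> = (\<Sum>l<n. of_rat (trace_wrt c n (x * c l)) * (of_int D * d l))"
      by (simp only: sum_distrib_left mult.left_commute)
    also have "\<dots> = int_comb T (\<lambda>l. of_int D * d l) n"
      unfolding int_comb_def by (rule sum.cong) (simp_all add: T)
    also have "\<dots> \<in> int_lattice c n"
      by (rule int_comb_mem[OF add_subgroup_int_lattice]) (use D(2) in blast)
    finally show ?thesis .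
  qed
  then show ?thesis using D(1) that by blast
qed

section \<open>Algebraic integers\<close>

text \<open>The module-theoretic characterisation of algebraic integers.\<close>

definition int_integral :: "'a::comm_ring_1 \<Rightarrow> bool" where
  "int_integral y \<longleftrightarrow> (\<exists>F. finite F \<and> 1 \<in> group_closure F \<and> (\<forall>f\<in>F. y * f \<in> group_closure F))"

lemma int_integral_of_int: "int_integral (of_int k :: 'a::comm_ring_1)"
proof -
  have one: "(1::'a) \<in> group_closure {1}" by (rule group_closure.base) simp
  then have "(of_int k :: 'a) * 1 \<in> group_closure {1}" by (rule group_closure_of_int_mult)
  then show ?thesis unfolding int_integral_def using one by (intro exI[of _ "{1}"]) simp
qed

lemma int_integral_add_mult:
  fixes y1 y2 :: "'a::comm_ring_1"
  assumes "int_integral y1" and "int_integral y2"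
  shows "int_integral (y1 + y2)" and "int_integral (y1 * y2)"
proof -
  obtain F1 where F1: "finite F1" "1 \<in> group_closure F1" "\<forall>f\<in>F1. y1 * f \<in> group_closure F1"
    using assms(1) unfolding int_integral_def by blast
  obtain F2 where F2: "finite F2" "1 \<in> group_closure F2" "\<forall>f\<in>F2. y2 * f \<in> group_closure F2"
    using assms(2) unfolding int_integral_def by blast
  let ?F = "F1 * F2"
  have fin: "finite ?F" using F1(1) F2(1) by (rule finite_set_times)
  have one: "1 \<in> group_closure ?F" using group_closure_times[OF F1(2) F2(2)] by simp
  have closed: "(y1 + y2) * f \<in> group_closure ?F \<and> y1 * y2 * f \<in> group_closure ?F" if "f \<in> ?F" for f
  proof -
    obtain a b where ab: "f = a * b" "a \<in> F1" "b \<in> F2" using \<open>f \<in> ?F\<close> by (rule set_times_elim)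
    have a: "a \<in> group_closure F1" and b: "b \<in> group_closure F2"
      using ab(2,3) by (simp_all add: group_closure.base)
    have "(y1 * a) * b \<in> group_closure ?F" by (rule group_closure_times[OF F1(3)[rule_format, OF ab(2)] b])
    moreover have "a * (y2 * b) \<in> group_closure ?F" by (rule group_closure_times[OF a F2(3)[rule_format, OF ab(3)]])
    moreover have "(y1 * a) * (y2 * b) \<in> group_closure ?F"
      by (rule group_closure_times[OF F1(3)[rule_format, OF ab(2)] F2(3)[rule_format, OF ab(3)]])
    moreover have "(y1 + y2) * f = (y1 * a) * b + a * (y2 * b)" and "y1 * y2 * f = (y1 * a) * (y2 * b)"
      using ab(1) by (simp_all add: algebra_simps)
    ultimately show ?thesis by (simp add: group_closure_add)
  qed
  show "int_integral (y1 + y2)" unfolding int_integral_def using fin one closed by blast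
  show "int_integral (y1 * y2)" unfolding int_integral_def using fin one closed by blast
qed

lemma subring_int_integral: "is_subring {y :: 'a::field. int_integral y}"
proof -
  have "int_integral (- y)" if "int_integral y" for y :: 'a
    using int_integral_add_mult(2)[OF int_integral_of_int[of "-1"] that] by simp
  then show ?thesis
    unfolding is_subring_def
    using int_integral_of_int[of 0] int_integral_of_int[of 1] int_integral_add_mult by auto
qed

lemma group_closure_scaled_into_lattice:
  fixes c :: "nat \<Rightarrow> 'a::field_char_0"
  assumes c: "rat_basis c n" and F: "finite F"
  obtains D :: int where "D \<noteq> 0" and "\<And>x. x \<in> group_closure F \<Longrightarrow> of_int D * x \<in> int_lattice c n"
proof -
  obtain D where D: "D > 0" "\<And>f. f \<in> F \<Longrightarrow> of_int D * f \<in> int_lattice c n"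
    using rat_basis_scaled_into_lattice[OF c F] by blast
  let ?H = "{x. of_int D * x \<in> int_lattice c n}"
  have "add_subgroup ?H"
    using add_subgroup_int_lattice[of c n] unfolding add_subgroup_def by (simp add: distrib_left)
  then have "group_closure F \<subseteq> ?H"
    using group_closure_mono[of F ?H] D(2) add_subgroup_group_closure_eq by blast
  with D(1) show ?thesis by (intro that[of D]) auto
qed

lemma int_integral_trace:
  fixes c :: "nat \<Rightarrow> 'a::field_char_0"
  assumes c: "rat_basis c n" and y: "int_integral y"
  shows "trace_wrt c n y \<in> \<int>"
proof -
  obtain F where F: "finite F" "1 \<in> group_closure F" "\<forall>f\<in>F. y * f \<in> group_closure F"
    using y unfolding int_integral_def by blast
  define L where "L = group_closure (F * c ` {..<n})"
  have c_L: "c i \<in> L" if "i < n" for i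
    using group_closure_times[OF F(2), of "c i" "c ` {..<n}"] that
    unfolding L_def by (simp add: group_closure.base)
  have y_L: "y * x \<in> L" if "x \<in> L" for x
    unfolding L_def
  proof (rule group_closure_mult_closed[OF _ that[unfolded L_def]])
    fix f assume "f \<in> F * c ` {..<n}"
    then obtain a b where ab: "f = a * b" "a \<in> F" "b \<in> c ` {..<n}" by (rule set_times_elim)
    then have "(y * a) * b \<in> group_closure (F * c ` {..<n})"
      using F(3) by (intro group_closure_times) (simp_all add: group_closure.base)
    then show "y * f \<in> group_closure (F * c ` {..<n})" using ab(1) by (simp add: mult.assoc)
  qed
  obtain D where D: "D \<noteq> 0" "\<And>x. x \<in> L \<Longrightarrow> of_int D * x \<in> int_lattice c n"
    using group_closure_scaled_into_lattice[OF c finite_set_times[OF F(1)]] unfolding L_def by blast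
  obtain m e where e: "int_basis L e m"
    using scaled_add_subgroup_int_basis[OF rat_basis_int_independent[OF c] _ D]
      add_subgroup_group_closure unfolding L_def by blast
  have e_basis: "rat_basis e m"
    using rat_basis_of_int_basis[OF c] e c_L unfolding int_basis_def by blast
  have "rat_coord e m (y * e l) l \<in> \<int>" if l: "l < m" for l
  proof -
    have "y * e l \<in> int_lattice e m" using y_L e l unfolding int_basis_def by blast
    then obtain z where "y * e l = int_comb z e m" unfolding int_lattice_def by blast
    then show ?thesis using rat_coord_int_comb[OF e_basis l] by simp
  qed
  then have "trace_wrt e m y \<in> \<int>" unfolding trace_wrt_def by (intro Ints_sum) auto
  then show ?thesis using trace_wrt_basis_indep[OF c e_basis] by simp
qed

section \<open>Laurent spans of a primitive relation\<close>

definition laurent_span :: "'a::field \<Rightarrow> int \<Rightarrow> int \<Rightarrow> 'a set" where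
  "laurent_span g lo hi = group_closure ((\<lambda>m. g powi m) ` {lo..hi})"

lemma laurent_span_sum:
  "finite A \<Longrightarrow> (\<And>i. i \<in> A \<Longrightarrow> lo \<le> f i \<and> f i \<le> hi) \<Longrightarrow>
    (\<Sum>i\<in>A. of_int (a i) * g powi f i) \<in> laurent_span g lo hi"
  unfolding laurent_span_def by (rule group_closure_sum_of_int) (auto intro: group_closure.base)

lemma laurent_span_power: "lo \<le> m \<Longrightarrow> m \<le> hi \<Longrightarrow> of_int k * g powi m \<in> laurent_span g lo hi"
  using laurent_span_sum[of "{()}" lo "\<lambda>_. m" hi "\<lambda>_. k" g] by simp

lemma laurent_span_mono: "lo' \<le> lo \<Longrightarrow> hi \<le> hi' \<Longrightarrow> laurent_span g lo hi \<subseteq> laurent_span g lo' hi'"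
  unfolding laurent_span_def by (rule group_closure_mono) auto

lemma laurent_span_add: "x \<in> laurent_span g lo hi \<Longrightarrow> y \<in> laurent_span g lo hi \<Longrightarrow> x + y \<in> laurent_span g lo hi"
  unfolding laurent_span_def by (rule group_closure_add)

lemma laurent_span_uminus: "x \<in> laurent_span g lo hi \<Longrightarrow> - x \<in> laurent_span g lo hi"
  unfolding laurent_span_def by simp

lemma laurent_span_sum_of_int:
  "finite A \<Longrightarrow> (\<And>k. k \<in> A \<Longrightarrow> w k \<in> laurent_span g lo hi) \<Longrightarrow>
    (\<Sum>k\<in>A. of_int (e k) * w k) \<in> laurent_span g lo hi"
  unfolding laurent_span_def by (rule group_closure_sum_of_int)

lemma laurent_span_inverse: "laurent_span (inverse g) lo hi = laurent_span g (- hi) (- lo)"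
proof -
  have "(\<lambda>m. inverse g powi m) ` {lo..hi} = (\<lambda>m. g powi m) ` uminus ` {lo..hi}"
    unfolding image_image by (simp add: power_int_minus power_int_inverse)
  then show ?thesis unfolding laurent_span_def by simp
qed

lemma laurent_span_power_mult_mem:
  assumes S: "is_subring S" and b: "b \<in> S" "b * g \<in> S" and x: "x \<in> laurent_span g 0 (int N)"
  shows "b ^ N * x \<in> S"
  using x unfolding laurent_span_def
proof induction
  case (base s)
  then consider "s = 0" | m where "m \<le> N" "s = g ^ m"
    by (auto simp: image_iff) (metis nat_le_iff nat_0_le power_int_of_nat)
  then show ?case
  proof cases
    case 1
    then show ?thesis using subring_zero[OF S] by simp
  next
    case 2
    then have "b ^ N * s = b ^ (N - m) * (b * g) ^ m"
      by (simp add: power_mult_distrib mult.assoc power_add[symmetric])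
    then show ?thesis using S b by (simp add: subring_mult subring_power)
  qed
next
  case (diff s t)
  then show ?case using S by (simp add: right_diff_distrib subring_diff)
qed

lemma laurent_span_subring_mem:
  assumes S: "is_subring S" and b: "b \<in> S" "b * g \<in> S" "(1 - b) * inverse g \<in> S"
    and x: "x \<in> laurent_span g 0 (int N)" "x \<in> laurent_span g (- int N) 0"
  shows "x \<in> S"
proof -
  have b': "1 - b \<in> S" using subring_diff[OF S subring_one[OF S] b(1)] .
  have A: "b ^ N * x \<in> S" by (rule laurent_span_power_mult_mem[OF S b(1,2) x(1)])
  have B: "(1 - b) ^ N * x \<in> S"
    using laurent_span_power_mult_mem[OF S b' b(3)] x(2) by (simp add: laurent_span_inverse)
  have "x = (b + (1 - b)) ^ (2 * N) * x" by simp
  also have "\<dots> = (\<Sum>j\<le>2 * N. of_nat (2 * N choose j) * (b ^ j * (1 - b) ^ (2 * N - j) * x))"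
    unfolding binomial_ring sum_distrib_right by (simp add: mult.assoc)
  also have "\<dots> \<in> S"
  proof (intro subring_sum[OF S] subring_mult[OF S subring_of_nat[OF S]])
    fix j
    show "b ^ j * (1 - b) ^ (2 * N - j) * x \<in> S"
    proof (cases "N \<le> j")
      case True
      then have "b ^ j = b ^ (j - N) * b ^ N" by (simp add: power_add[symmetric])
      then have "b ^ j * (1 - b) ^ (2 * N - j) * x = b ^ (j - N) * (1 - b) ^ (2 * N - j) * (b ^ N * x)"
        by (simp only: ac_simps)
      then show ?thesis by (simp only:) (intro subring_mult[OF S] subring_power[OF S] A b(1) b')
    next
      case False
      then have "2 * N - j = (N - j) + N" by simp
      then have "(1 - b) ^ (2 * N - j) = (1 - b) ^ (N - j) * (1 - b) ^ N" by (simp add: power_add)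
      then have "b ^ j * (1 - b) ^ (2 * N - j) * x = b ^ j * (1 - b) ^ (N - j) * ((1 - b) ^ N * x)"
        by (simp only: ac_simps)
      then show ?thesis by (simp only:) (intro subring_mult[OF S] subring_power[OF S] B b(1) b')
    qed
  qed
  finally show ?thesis .
qed

lemma int_integral_laurent_stable:
  assumes "\<And>j. 0 \<le> j \<Longrightarrow> j \<le> int n \<Longrightarrow> x * g powi j \<in> laurent_span g 0 (int n)"
  shows "int_integral x"
  unfolding int_integral_def
proof (intro exI conjI)
  let ?F = "(\<lambda>m. g powi m) ` {0..int n}"
  show "finite ?F" by simp
  show "1 \<in> group_closure ?F" by (rule group_closure.base) (auto simp: image_iff intro!: bexI[of _ 0])
  show "\<forall>f\<in>?F. x * f \<in> group_closure ?F" using assms unfolding laurent_span_def by auto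
qed

locale int_relation =
  fixes g :: "'a::field" and a :: "nat \<Rightarrow> int" and n :: nat
  assumes nonzero: "g \<noteq> 0" and relation: "(\<Sum>i\<le>n. of_int (a i) * g ^ i) = 0"
begin

text \<open>By the relation, low_part k also equals -(a k + a (k + 1) g + ... + a n g^(n - k)), so it
  lies in the Z-span of negative as well as of nonnegative powers of g.\<close>

definition low_part :: "nat \<Rightarrow> 'a" where
  "low_part k = (\<Sum>i<k. of_int (a i) * g powi (int i - int k))"

lemma low_part_mult: "low_part k * g powi j = (\<Sum>i<k. of_int (a i) * g powi (int i - int k + j))"
  unfolding low_part_def sum_distrib_right
  by (rule sum.cong) (auto simp: power_int_add nonzero mult.assoc)

lemma low_part_mult_eq:
  assumes "k \<le> n"
  shows "low_part k * g powi j = - (\<Sum>i\<in>{k..n}. of_int (a i) * g powi (int i - int k + j))"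
proof -
  let ?f = "\<lambda>i. of_int (a i) * g powi (int i - int k + j)"
  have "g powi (int i - int k + j) = g ^ i * g powi (j - int k)" for i
  proof -
    have eq: "int i - int k + j = int i + (j - int k)" by simp
    show ?thesis by (subst eq) (simp add: power_int_add nonzero)
  qed
  then have "(\<Sum>i\<le>n. ?f i) = (\<Sum>i\<le>n. of_int (a i) * g ^ i) * g powi (j - int k)"
    unfolding sum_distrib_right by (simp add: mult.assoc)
  then have zero: "(\<Sum>i\<le>n. ?f i) = 0" using relation by simp
  have "{..n} = {..<k} \<union> {k..n}" using assms by auto
  then have "(\<Sum>i\<le>n. ?f i) = (\<Sum>i<k. ?f i) + (\<Sum>i\<in>{k..n}. ?f i)"
    by (simp only:) (rule sum.union_disjoint, auto)
  then show ?thesis using zero unfolding low_part_mult by (simp add: eq_neg_iff_add_eq_0)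
qed

lemma low_part_add_mult_eq:
  assumes "k \<le> n"
  shows "(low_part k + of_int (a k)) * g powi j = - (\<Sum>i\<in>{k<..n}. of_int (a i) * g powi (int i - int k + j))"
proof -
  have "{k..n} = insert k {k<..n}" using assms by auto
  then show ?thesis using low_part_mult_eq[OF assms, of j] by (simp add: distrib_right)
qed

lemma low_part_mult_mem_neg:
  "lo \<le> j - int k \<Longrightarrow> j - 1 \<le> hi \<Longrightarrow> low_part k * g powi j \<in> laurent_span g lo hi"
  unfolding low_part_mult by (rule laurent_span_sum) auto

lemma low_part_mult_mem_pos:
  "k \<le> n \<Longrightarrow> lo \<le> j \<Longrightarrow> j + int n - int k \<le> hi \<Longrightarrow> low_part k * g powi j \<in> laurent_span g lo hi"
  unfolding low_part_mult_eq by (intro laurent_span_uminus laurent_span_sum) auto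

lemma low_part_add_mult_mem:
  "k \<le> n \<Longrightarrow> lo \<le> j + 1 \<Longrightarrow> j + int n - int k \<le> hi \<Longrightarrow>
    (low_part k + of_int (a k)) * g powi j \<in> laurent_span g lo hi"
  unfolding low_part_add_mult_eq by (intro laurent_span_uminus laurent_span_sum) auto

lemma low_part_mult_mem:
  "k \<le> n \<Longrightarrow> 0 \<le> j \<Longrightarrow> j \<le> int n + 1 \<Longrightarrow> low_part k * g powi j \<in> laurent_span g 0 (int n)"
  by (cases "int k \<le> j") (auto intro: low_part_mult_mem_neg low_part_mult_mem_pos)

lemma int_integral_leading_mult: "int_integral (of_int (a n) * g)"
proof (cases "n = 0")
  case True
  then show ?thesis using relation int_integral_of_int[of 0] by simp
next
  case False
  then have "{n - 1<..n} = {n}" by auto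
  then have eq: "of_int (a n) * g = of_int (- 1) * (low_part (n - 1) + of_int (a (n - 1)))"
    using low_part_add_mult_eq[of "n - 1" 0] False by simp
  have "int_integral (low_part (n - 1))"
    by (rule int_integral_laurent_stable[of n]) (auto intro: low_part_mult_mem)
  then have "int_integral (low_part (n - 1) + of_int (a (n - 1)))"
    by (rule int_integral_add_mult(1)[OF _ int_integral_of_int])
  then show ?thesis unfolding eq by (rule int_integral_add_mult(2)[OF int_integral_of_int])
qed

end

locale primitive_int_relation = int_relation +
  fixes e :: "nat \<Rightarrow> int"
  assumes bezout: "(\<Sum>k\<le>n. e k * a k) = 1"
begin

definition splitter :: 'a where
  "splitter = (\<Sum>k\<le>n. of_int (e k) * low_part k)"

lemma splitter_mult: "splitter * g powi j = (\<Sum>k\<le>n. of_int (e k) * (low_part k * g powi j))"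
  unfolding splitter_def sum_distrib_right by (simp add: mult.assoc)

lemma one_plus_splitter_mult:
  "(1 + splitter) * g powi j = (\<Sum>k\<le>n. of_int (e k) * ((low_part k + of_int (a k)) * g powi j))"
proof -
  have "(\<Sum>k\<le>n. of_int (e k) * (low_part k + of_int (a k))) = splitter + of_int (\<Sum>k\<le>n. e k * a k)"
    unfolding splitter_def by (simp add: distrib_left sum.distrib)
  then have "1 + splitter = (\<Sum>k\<le>n. of_int (e k) * (low_part k + of_int (a k)))"
    using bezout by simp
  then show ?thesis by (simp add: sum_distrib_right mult.assoc)
qed

lemma splitter_mult_mem_pos: "0 \<le> j \<Longrightarrow> j \<le> int n + 1 \<Longrightarrow> splitter * g powi j \<in> laurent_span g 0 (int n)"
  unfolding splitter_mult by (rule laurent_span_sum_of_int) (auto intro: low_part_mult_mem)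

lemma splitter_mult_mem_neg: "- 1 \<le> j \<Longrightarrow> j \<le> 1 \<Longrightarrow> splitter * g powi j \<in> laurent_span g (- int n - 1) 0"
  unfolding splitter_mult by (rule laurent_span_sum_of_int) (auto intro!: low_part_mult_mem_neg)

lemma one_plus_splitter_mult_mem_pos:
  assumes "0 \<le> j" "j \<le> int n"
  shows "(1 + splitter) * g powi (j - 1) \<in> laurent_span g 0 (int n)"
  unfolding one_plus_splitter_mult
proof (rule laurent_span_sum_of_int)
  fix k assume k: "k \<in> {..n}"
  show "(low_part k + of_int (a k)) * g powi (j - 1) \<in> laurent_span g 0 (int n)"
  proof (cases "j = 0")
    case True
    then show ?thesis using k by (intro low_part_add_mult_mem) auto
  next
    case False
    then show ?thesis using k assms unfolding distrib_right
      by (intro laurent_span_add low_part_mult_mem laurent_span_power) auto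
  qed
qed simp

lemma one_plus_splitter_mult_mem_neg: "(1 + splitter) * inverse g \<in> laurent_span g (- int n - 1) 0"
proof -
  have "(1 + splitter) * inverse g = (1 + splitter) * g powi (- 1)" by (simp add: power_int_minus)
  also have "\<dots> \<in> laurent_span g (- int n - 1) 0"
    unfolding one_plus_splitter_mult unfolding distrib_right
    by (intro laurent_span_sum_of_int laurent_span_add low_part_mult_mem_neg laurent_span_power) auto
  finally show ?thesis .
qed

lemma splitter_int_integral:
  "int_integral splitter" "int_integral (splitter * g)" "int_integral ((1 + splitter) * inverse g)"
proof -
  show "int_integral splitter"
    by (rule int_integral_laurent_stable[of n]) (auto intro: splitter_mult_mem_pos)
  show "int_integral (splitter * g)"
  proof (rule int_integral_laurent_stable[of n])
    fix j :: int assume "0 \<le> j" "j \<le> int n"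
    have "splitter * g * g powi j = splitter * g powi (j + 1)"
      unfolding power_int_add_1[OF disjI1[OF nonzero]] by (simp only: ac_simps)
    also have "\<dots> \<in> laurent_span g 0 (int n)"
      using splitter_mult_mem_pos[of "j + 1"] \<open>0 \<le> j\<close> \<open>j \<le> int n\<close> by simp
    finally show "splitter * g * g powi j \<in> laurent_span g 0 (int n)" .
  qed
  show "int_integral ((1 + splitter) * inverse g)"
  proof (rule int_integral_laurent_stable[of n])
    fix j :: int assume "0 \<le> j" "j \<le> int n"
    then show "(1 + splitter) * inverse g * g powi j \<in> laurent_span g 0 (int n)"
      using one_plus_splitter_mult_mem_pos[of j] nonzero
      by (simp add: power_int_diff mult.assoc field_simps)
  qed
qed

lemma splitter_mem:
  assumes S: "is_subring S" and b: "b \<in> S" "b * g \<in> S" "(1 - b) * inverse g \<in> S"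
  shows "splitter \<in> S" "splitter * g \<in> S" "(1 + splitter) * inverse g \<in> S"
proof -
  have mem: "x \<in> S" if "x \<in> laurent_span g 0 (int n)" "x \<in> laurent_span g (- int n - 1) 0" for x
  proof (rule laurent_span_subring_mem[OF S b])
    show "x \<in> laurent_span g 0 (int (Suc n))"
      using that(1) laurent_span_mono[of 0 0 "int n" "int (Suc n)" g] by auto
    show "x \<in> laurent_span g (- int (Suc n)) 0"
      using that(2) laurent_span_mono[of "- int (Suc n)" "- int n - 1" 0 0 g] by auto
  qed
  show "splitter \<in> S"
    using mem splitter_mult_mem_pos[of 0] splitter_mult_mem_neg[of 0] by simp
  show "splitter * g \<in> S"
    using mem splitter_mult_mem_pos[of 1] splitter_mult_mem_neg[of 1] by simp
  show "(1 + splitter) * inverse g \<in> S"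
    using mem one_plus_splitter_mult_mem_pos[of 0] one_plus_splitter_mult_mem_neg
    by (simp add: power_int_minus)
qed

end

section \<open>Integral bases and orders\<close>

lemma rat_basis_int_relation:
  fixes g :: "'a::field_char_0" and c :: "nat \<Rightarrow> 'a"
  assumes c: "rat_basis c n"
  obtains A :: "nat \<Rightarrow> int" where "\<exists>i\<le>n. A i \<noteq> 0" and "(\<Sum>i\<le>n. of_int (A i) * g ^ i) = 0"
proof -
  obtain q where q: "\<exists>i\<le>n. q i \<noteq> 0" "(\<Sum>i\<le>n. of_rat (q i) * g ^ i) = 0"
    using rat_basis_dependent[OF c, of "\<lambda>i. g ^ i"] by blast
  obtain D where D: "D > 0" "\<forall>r\<in>q ` {..n}. of_int D * r \<in> \<int>"
    using rat_common_denominator[of "q ` {..n}"] by blast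
  have "\<forall>i. \<exists>w. i \<le> n \<longrightarrow> of_int D * q i = of_int w" using D(2) by (auto simp: Ints_def)
  then obtain A where A: "\<And>i. i \<le> n \<Longrightarrow> of_int D * q i = of_int (A i)" by metis
  have A': "(of_int (A i) :: 'a) = of_int D * of_rat (q i)" if "i \<le> n" for i
    using arg_cong[OF A[OF that], of "of_rat :: rat \<Rightarrow> 'a"] by (simp add: of_rat_mult)
  have "(\<Sum>i\<le>n. of_int (A i) * g ^ i) = of_int D * (\<Sum>i\<le>n. of_rat (q i) * g ^ i)"
    unfolding sum_distrib_left by (rule sum.cong) (simp_all add: A' mult.assoc)
  then have "(\<Sum>i\<le>n. of_int (A i) * g ^ i) = 0" using q(2) by simp
  moreover have "\<exists>i\<le>n. A i \<noteq> 0" using q(1) A D(1) by (metis mult_eq_0_iff of_int_eq_0_iff less_irrefl)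
  ultimately show ?thesis using that by blast
qed

lemma rat_basis_primitive_relation:
  fixes g :: "'a::field_char_0" and c :: "nat \<Rightarrow> 'a"
  assumes c: "rat_basis c n"
  obtains a e :: "nat \<Rightarrow> int" where "(\<Sum>i\<le>n. of_int (a i) * g ^ i) = 0" and "(\<Sum>i\<le>n. e i * a i) = 1"
proof -
  obtain A where A: "\<exists>i\<le>n. A i \<noteq> 0" "(\<Sum>i\<le>n. of_int (A i) * g ^ i) = 0"
    using rat_basis_int_relation[OF c] by blast
  define d where "d = Gcd (A ` {..n})"
  have d0: "d \<noteq> 0" using A(1) unfolding d_def by auto
  obtain e where e: "d = (\<Sum>i\<le>n. e i * A i)"
    using group_closure_int_image[OF Gcd_in_group_closure] unfolding d_def by blast
  define a where "a i = A i div d" for i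
  have A_eq: "A i = d * a i" if "i \<le> n" for i
    using that unfolding a_def d_def by simp
  have "d * (\<Sum>i\<le>n. e i * a i) = (\<Sum>i\<le>n. e i * A i)"
    unfolding sum_distrib_left by (rule sum.cong) (simp_all add: A_eq mult.left_commute)
  then have "d * (\<Sum>i\<le>n. e i * a i) = d" using e by simp
  then have "(\<Sum>i\<le>n. e i * a i) = 1" using d0 by simp
  moreover have "of_int d * (\<Sum>i\<le>n. of_int (a i) * g ^ i) = (\<Sum>i\<le>n. of_int (A i) * (g :: 'a) ^ i)"
    unfolding sum_distrib_left by (rule sum.cong) (simp_all add: A_eq mult.assoc)
  then have "(\<Sum>i\<le>n. of_int (a i) * g ^ i) = 0" using A(2) d0 by simp
  ultimately show ?thesis using that by blast
qed

lemma int_integral_multiple: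
  fixes g :: "'a::field_char_0" and c :: "nat \<Rightarrow> 'a"
  assumes c: "rat_basis c n" and g: "g \<noteq> 0"
  obtains k :: int where "k \<noteq> 0" and "int_integral (of_int k * g)"
proof -
  obtain A where A: "\<exists>i\<le>n. A i \<noteq> 0" "(\<Sum>i\<le>n. of_int (A i) * g ^ i) = 0"
    using rat_basis_int_relation[OF c] by blast
  define N where "N = Max {i. i \<le> n \<and> A i \<noteq> 0}"
  have fin: "finite {i. i \<le> n \<and> A i \<noteq> 0}" by simp
  have N: "N \<le> n" "A N \<noteq> 0" using Max_in[OF fin] A(1) unfolding N_def by auto
  have "A i = 0" if "N < i" "i \<le> n" for i
  proof (rule ccontr)
    assume "A i \<noteq> 0"
    then have "i \<le> N" using Max_ge[OF fin] that(2) unfolding N_def by blast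
    then show False using that(1) by simp
  qed
  then have "(\<Sum>i\<le>N. of_int (A i) * g ^ i) = (\<Sum>i\<le>n. of_int (A i) * g ^ i)"
    using N(1) by (intro sum.mono_neutral_left) auto
  then interpret int_relation g A N using g A(2) by unfold_locales simp_all
  show ?thesis using that N(2) int_integral_leading_mult by blast
qed

lemma number_field_integral_rat_basis:
  assumes "number_field TYPE('a::field_char_0)"
  obtains c :: "nat \<Rightarrow> 'a::field_char_0" and n where "rat_basis c n" and "\<And>i. i < n \<Longrightarrow> int_integral (c i)"
proof -
  obtain c0 :: "nat \<Rightarrow> 'a" and n where c0: "rat_basis c0 n" using number_field_rat_basis[OF assms] .
  have "c0 i \<noteq> 0" if "i < n" for i
    using rat_coord_basis[OF c0 that that] rat_coord_eq[OF c0 _ that, of _ "\<lambda>_. 0"]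
    by (auto simp: rat_comb_def)
  then have "\<forall>i. \<exists>k::int. i < n \<longrightarrow> k \<noteq> 0 \<and> int_integral (of_int k * c0 i)"
    using int_integral_multiple[OF c0] by metis
  then obtain k where k: "\<And>i. i < n \<Longrightarrow> k i \<noteq> 0 \<and> int_integral (of_int (k i) * c0 i)" by metis
  define c where "c i = of_int (k i) * c0 i" for i
  have "rat_basis c n"
    unfolding rat_basis_def
  proof (intro conjI allI impI)
    fix x
    obtain q where q: "x = rat_comb q c0 n" using c0 unfolding rat_basis_def by blast
    have "rat_comb q c0 n = rat_comb (\<lambda>i. q i / of_int (k i)) c n"
      unfolding rat_comb_def c_def by (rule sum.cong) (auto simp: k of_rat_divide)
    then show "\<exists>q. x = rat_comb q c n" using q by blast
  next
    fix q i assume q: "rat_comb q c n = 0" and i: "i < n"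
    have "rat_comb q c n = rat_comb (\<lambda>i. q i * of_int (k i)) c0 n"
      unfolding rat_comb_def c_def by (rule sum.cong) (auto simp: of_rat_mult)
    then have "q i * of_int (k i) = 0" using q c0 i unfolding rat_basis_def by metis
    then show "q i = 0" using k[OF i] by simp
  qed
  then show ?thesis using that k unfolding c_def by blast
qed

lemma integral_subring_is_order:
  fixes S :: "'a::field_char_0 set"
  assumes K: "number_field TYPE('a)" and S: "is_subring S" and integral: "\<And>x. x \<in> S \<Longrightarrow> int_integral x"
  shows "is_order S"
proof -
  obtain c :: "nat \<Rightarrow> 'a" and n where c: "rat_basis c n" and c_int: "\<And>i. i < n \<Longrightarrow> int_integral (c i)"
    using number_field_integral_rat_basis[OF K] by blast
  obtain D where D: "D > 0"
    "\<And>x. (\<And>j. j < n \<Longrightarrow> trace_wrt c n (x * c j) \<in> \<int>) \<Longrightarrow> of_int D * x \<in> int_lattice c n"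
    using trace_dual_bound[OF c] by blast
  have "of_int D * x \<in> int_lattice c n" if "x \<in> S" for x
    using D(2) int_integral_trace[OF c] int_integral_add_mult(2)[OF integral[OF that] c_int] by blast
  then obtain m e where "int_basis S e m"
    using scaled_add_subgroup_int_basis[OF rat_basis_int_independent[OF c] subring_add_subgroup[OF S]] D(1)
    by (metis less_irrefl)
  then show ?thesis by (rule int_basis_is_order[OF S])
qed

section \<open>Invertibility of S Y\<close>

text \<open>For g \<noteq> 0 this is equivalent to the invertibility of S{1, g}.\<close>

definition one_splits :: "'a::field set \<Rightarrow> 'a \<Rightarrow> bool" where
  "one_splits S g \<longleftrightarrow> (\<exists>b\<in>S. b * g \<in> S \<and> (1 - b) * inverse g \<in> S)"

lemma submodule_sum:
  assumes "is_submodule S J" and "finite A" and "\<And>i. i \<in> A \<Longrightarrow> f i \<in> J"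
  shows "sum f A \<in> J"
  using assms(2,3) by (induction A rule: finite_induct) (use assms(1) in \<open>auto simp: is_submodule_def\<close>)

lemma submodule_mult: "is_submodule S J \<Longrightarrow> s \<in> S \<Longrightarrow> x \<in> J \<Longrightarrow> s * x \<in> J"
  unfolding is_submodule_def by blast

lemma ideal_mult_mult: "x \<in> I \<Longrightarrow> y \<in> J \<Longrightarrow> x * y \<in> ideal_mult I J"
  unfolding ideal_mult_def by (rule CollectI, rule exI[of _ 1], rule exI[of _ "\<lambda>_. x"], rule exI[of _ "\<lambda>_. y"]) simp

lemma gen_module_mult:
  assumes "is_subring S" and "finite Y" and "y \<in> Y" and "s \<in> S"
  shows "s * y \<in> gen_module S Y"
  unfolding gen_module_def
proof (intro CollectI exI[of _ "\<lambda>w. if w = y then s else 0"] conjI)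
  show "s * y = (\<Sum>w\<in>Y. (if w = y then s else 0) * w)"
    using assms(2,3) by (simp add: if_distrib[of "\<lambda>v. v * _"] cong: if_cong)
  show "\<forall>w\<in>Y. (if w = y then s else 0) \<in> S" using assms(1,4) subring_zero by auto
qed

lemma gen_module_submodule:
  assumes S: "is_subring S"
  shows "is_submodule S (gen_module S Y)"
  unfolding is_submodule_def
proof (intro conjI ballI)
  show "0 \<in> gen_module S Y"
    unfolding gen_module_def using subring_zero[OF S] by (intro CollectI exI[of _ "\<lambda>_. 0"]) simp
next
  fix x y assume "x \<in> gen_module S Y" "y \<in> gen_module S Y"
  then obtain s t where st: "x = (\<Sum>w\<in>Y. s w * w)" "\<forall>w\<in>Y. s w \<in> S" "y = (\<Sum>w\<in>Y. t w * w)" "\<forall>w\<in>Y. t w \<in> S"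
    unfolding gen_module_def by blast
  then have "x + y = (\<Sum>w\<in>Y. (s w + t w) * w)" by (simp add: distrib_right sum.distrib)
  moreover have "\<forall>w\<in>Y. s w + t w \<in> S" using st S by (simp add: subring_add)
  ultimately show "x + y \<in> gen_module S Y"
    unfolding gen_module_def by (intro CollectI exI[of _ "\<lambda>w. s w + t w"] conjI)
next
  fix r x assume "r \<in> S" "x \<in> gen_module S Y"
  then obtain s where s: "x = (\<Sum>w\<in>Y. s w * w)" "\<forall>w\<in>Y. s w \<in> S" unfolding gen_module_def by blast
  then have "r * x = (\<Sum>w\<in>Y. (r * s w) * w)" by (simp add: sum_distrib_left mult.assoc)
  moreover have "\<forall>w\<in>Y. r * s w \<in> S" using s S \<open>r \<in> S\<close> by (simp add: subring_mult)
  ultimately show "r * x \<in> gen_module S Y"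
    unfolding gen_module_def by (intro CollectI exI[of _ "\<lambda>w. r * s w"] conjI)
qed

lemma invertible_pair_one_splits:
  assumes S: "is_subring S" and g: "g \<noteq> 0" and inv: "invertible_ideal S (gen_module S {1, g})"
  shows "one_splits S g"
proof (cases "g = 1")
  case True
  then show ?thesis unfolding one_splits_def using subring_one[OF S] subring_zero[OF S] by force
next
  case False
  let ?I = "gen_module S {1, g}"
  obtain J where J: "is_submodule S J" "ideal_mult ?I J = S"
    using inv unfolding invertible_ideal_def by blast
  have "1 \<in> ideal_mult ?I J" using J(2) subring_one[OF S] by simp
  then obtain m :: nat and x y where xy: "1 = (\<Sum>i<m. x i * y i)" "\<forall>i<m. x i \<in> ?I \<and> y i \<in> J"
    unfolding ideal_mult_def by blast
  have "\<forall>i. i < m \<longrightarrow> (\<exists>s. s 1 \<in> S \<and> s g \<in> S \<and> x i = s 1 + s g * g)"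
  proof (intro allI impI)
    fix i assume "i < m"
    then obtain s where "x i = (\<Sum>w\<in>{1, g}. s w * w)" "\<forall>w\<in>{1, g}. s w \<in> S"
      using xy(2) unfolding gen_module_def by blast
    then show "\<exists>s. s 1 \<in> S \<and> s g \<in> S \<and> x i = s 1 + s g * g"
      using False by (intro exI[of _ s]) auto
  qed
  then obtain s where s: "\<And>i. i < m \<Longrightarrow> s i 1 \<in> S \<and> s i g \<in> S \<and> x i = s i 1 + s i g * g" by metis
  define b where "b = (\<Sum>i<m. s i 1 * y i)"
  define c where "c = (\<Sum>i<m. s i g * y i)"
  have "b \<in> J" "c \<in> J"
    unfolding b_def c_def using s xy(2) by (auto intro!: submodule_sum[OF J(1)] submodule_mult[OF J(1)])
  have "(\<Sum>i<m. x i * y i) = (\<Sum>i<m. s i 1 * y i + g * (s i g * y i))"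
    by (rule sum.cong) (simp_all add: s algebra_simps)
  then have one: "1 = b + g * c" unfolding b_def c_def xy(1)[symmetric] by (simp add: sum.distrib sum_distrib_left)
  have one_I: "1 \<in> ?I" and g_I: "g \<in> ?I" using gen_module_mult[OF S, of "{1, g}" _ 1] subring_one[OF S] by auto
  have "b \<in> S" using ideal_mult_mult[OF one_I \<open>b \<in> J\<close>] J(2) by simp
  moreover have "b * g \<in> S" using ideal_mult_mult[OF g_I \<open>b \<in> J\<close>] J(2) by (simp add: mult.commute)
  moreover have "(1 - b) * inverse g = c" using one g by (simp add: field_simps)
  then have "(1 - b) * inverse g \<in> S" using ideal_mult_mult[OF one_I \<open>c \<in> J\<close>] J(2) by simp
  ultimately show ?thesis unfolding one_splits_def by blast
qed

context
  fixes S :: "'a::field set" and Y :: "'a set" and z :: 'a and c b :: "'a \<Rightarrow> 'a"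
  assumes S: "is_subring S" and Y: "finite Y" "z \<notin> Y" and nonzero: "z \<noteq> 0" "\<And>y. y \<in> Y \<Longrightarrow> y \<noteq> 0"
    and c: "(\<Sum>y\<in>Y. c y * y) = 1" "\<And>y y'. y \<in> Y \<Longrightarrow> y' \<in> Y \<Longrightarrow> c y * y' \<in> S"
    and b: "\<And>y. y \<in> Y \<Longrightarrow> b y \<in> S" "\<And>y. y \<in> Y \<Longrightarrow> b y * (z * inverse y) \<in> S"
      "\<And>y. y \<in> Y \<Longrightarrow> (1 - b y) * (y * inverse z) \<in> S"
begin

text \<open>Each old weight c y is split between y and z using b y, which witnesses
  one_splits S (z / y).\<close>

definition insert_weights :: "'a \<Rightarrow> 'a" where
  "insert_weights w = (if w = z then (\<Sum>y\<in>Y. c y * (1 - b y) * y * inverse z) else c w * b w)"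

lemma insert_weights_sum: "(\<Sum>w\<in>insert z Y. insert_weights w * w) = 1"
proof -
  have "(\<Sum>w\<in>insert z Y. insert_weights w * w) =
      (\<Sum>y\<in>Y. c y * (1 - b y) * y * inverse z) * z + (\<Sum>y\<in>Y. c y * b y * y)"
    using Y unfolding insert_weights_def by (simp add: sum.insert) (rule sum.cong, auto)
  also have "\<dots> = (\<Sum>y\<in>Y. c y * (1 - b y) * y + c y * b y * y)"
    using nonzero(1) by (simp add: sum_distrib_right sum.distrib mult.assoc)
  also have "\<dots> = (\<Sum>y\<in>Y. c y * y)" by (rule sum.cong) (auto simp: algebra_simps)
  finally show ?thesis using c(1) by simp
qed

lemma insert_weights_mult_mem:
  assumes w: "w \<in> insert z Y" and w': "w' \<in> insert z Y"
  shows "insert_weights w * w' \<in> S"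
proof (cases "w = z")
  case True
  have one_minus_b: "1 - b y \<in> S" if "y \<in> Y" for y using b(1)[OF that] S by (metis subring_one subring_diff)
  have "insert_weights w * w' = (\<Sum>y\<in>Y. c y * (1 - b y) * y * inverse z * w')"
    unfolding insert_weights_def True using Y by (simp add: sum_distrib_right)
  also have "\<dots> \<in> S"
  proof (rule subring_sum[OF S])
    fix y assume y: "y \<in> Y"
    show "c y * (1 - b y) * y * inverse z * w' \<in> S"
    proof (cases "w' = z")
      case True
      then have "c y * (1 - b y) * y * inverse z * w' = (c y * y) * (1 - b y)" using nonzero(1) by simp
      then show ?thesis using c(2) y one_minus_b S by (metis subring_mult)
    next
      case False
      then have "w' \<in> Y" using w' by simp
      have "c y * (1 - b y) * y * inverse z * w' = (c y * w') * ((1 - b y) * (y * inverse z))"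
        by (simp add: ac_simps)
      then show ?thesis using c(2) y b(3) \<open>w' \<in> Y\<close> S by (metis subring_mult)
    qed
  qed
  finally show ?thesis .
next
  case False
  then have wY: "w \<in> Y" using w by simp
  show ?thesis
  proof (cases "w' = z")
    case True
    have "insert_weights w * w' = (c w * w) * (b w * (z * inverse w))"
      unfolding insert_weights_def True using False nonzero(2)[OF wY] by (simp add: field_simps)
    then show ?thesis using c(2) wY b(2) S by (metis subring_mult)
  next
    case False
    then have "w' \<in> Y" using w' by simp
    have "insert_weights w * w' = (c w * w') * b w"
      unfolding insert_weights_def using \<open>w \<noteq> z\<close> by (simp add: ac_simps)
    then show ?thesis using c(2) wY b(1) S \<open>w' \<in> Y\<close> by (metis subring_mult)
  qed
qed

end

lemma one_splits_partition_of_unity: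
  assumes S: "is_subring S" and G: "mult_subgroup G" and splits: "\<And>g. g \<in> G \<Longrightarrow> one_splits S g"
    and Y: "finite Y" "Y \<noteq> {}" "Y \<subseteq> G"
  shows "\<exists>c. (\<Sum>y\<in>Y. c y * y) = 1 \<and> (\<forall>y\<in>Y. \<forall>y'\<in>Y. c y * y' \<in> S)"
  using Y
proof (induction Y rule: finite_ne_induct)
  case (singleton y)
  then have "y \<noteq> 0" using G unfolding mult_subgroup_def by auto
  then show ?case using subring_one[OF S] by (intro exI[of _ "\<lambda>_. inverse y"]) simp
next
  case (insert z Y)
  have nonzero: "w \<noteq> 0" if "w \<in> G" for w using that G unfolding mult_subgroup_def by auto
  obtain c where c: "(\<Sum>y\<in>Y. c y * y) = 1" "\<forall>y\<in>Y. \<forall>y'\<in>Y. c y * y' \<in> S" using insert by blast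
  have "\<forall>y. y \<in> Y \<longrightarrow> one_splits S (z * inverse y)"
    using splits G insert.prems unfolding mult_subgroup_def by auto
  then have "\<forall>y. y \<in> Y \<longrightarrow> (\<exists>b. b \<in> S \<and> b * (z * inverse y) \<in> S \<and> (1 - b) * (y * inverse z) \<in> S)"
    unfolding one_splits_def by (simp add: mult.commute) blast
  then obtain b where b: "\<And>y. y \<in> Y \<Longrightarrow> b y \<in> S \<and> b y * (z * inverse y) \<in> S \<and> (1 - b y) * (y * inverse z) \<in> S"
    by metis
  then have b1: "\<And>y. y \<in> Y \<Longrightarrow> b y \<in> S" and b2: "\<And>y. y \<in> Y \<Longrightarrow> b y * (z * inverse y) \<in> S"
    and b3: "\<And>y. y \<in> Y \<Longrightarrow> (1 - b y) * (y * inverse z) \<in> S" by auto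
  have "z \<noteq> 0" and "\<And>y. y \<in> Y \<Longrightarrow> y \<noteq> 0" using nonzero insert.prems by auto
  note hyps = S insert.hyps(1,3) this c(1) c(2)[rule_format] b1 b2 b3
  show ?case
  proof (intro exI[of _ "insert_weights Y z c b"] conjI ballI)
    show "(\<Sum>w\<in>insert z Y. insert_weights Y z c b w * w) = 1"
      by (rule insert_weights_sum[OF hyps])
    show "insert_weights Y z c b w * w' \<in> S" if "w \<in> insert z Y" "w' \<in> insert z Y" for w w'
      by (rule insert_weights_mult_mem[OF hyps that])
  qed
qed

lemma ideal_mult_colon_subset:
  assumes S: "is_subring S"
  shows "ideal_mult (gen_module S Y) {x. \<forall>y\<in>Y. x * y \<in> S} \<subseteq> S"
proof
  fix x assume "x \<in> ideal_mult (gen_module S Y) {x. \<forall>y\<in>Y. x * y \<in> S}"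
  then obtain m :: nat and u v where uv: "x = (\<Sum>i<m. u i * v i)"
    "\<forall>i<m. u i \<in> gen_module S Y \<and> (\<forall>y\<in>Y. v i * y \<in> S)"
    unfolding ideal_mult_def by blast
  have "u i * v i \<in> S" if i: "i < m" for i
  proof -
    obtain s where s: "u i = (\<Sum>w\<in>Y. s w * w)" "\<forall>w\<in>Y. s w \<in> S"
      using uv(2) i unfolding gen_module_def by blast
    have "u i * v i = (\<Sum>w\<in>Y. s w * (v i * w))" unfolding s(1) sum_distrib_right by (simp add: ac_simps)
    also have "\<dots> \<in> S"
    proof (rule subring_sum[OF S])
      fix w assume "w \<in> Y"
      then show "s w * (v i * w) \<in> S" using s(2) uv(2) i by (auto intro: subring_mult[OF S])
    qed
    finally show ?thesis .
  qed
  then show "x \<in> S" unfolding uv(1) by (intro subring_sum[OF S]) auto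
qed

lemma one_splits_invertible:
  assumes S: "is_subring S" and G: "mult_subgroup G" and splits: "\<And>g. g \<in> G \<Longrightarrow> one_splits S g"
    and Y: "finite Y" "Y \<noteq> {}" "Y \<subseteq> G"
  shows "invertible_ideal S (gen_module S Y)"
proof -
  obtain c where c: "(\<Sum>y\<in>Y. c y * y) = 1" "\<forall>y\<in>Y. \<forall>y'\<in>Y. c y * y' \<in> S"
    using one_splits_partition_of_unity[OF S G splits Y] by blast
  let ?I = "gen_module S Y"
  define J where "J = {x. \<forall>y\<in>Y. x * y \<in> S}"
  have J: "is_submodule S J"
    unfolding is_submodule_def J_def using S by (auto simp: subring_zero subring_add distrib_right mult.assoc subring_mult)
  have "S \<subseteq> ideal_mult ?I J"
  proof
    fix x assume x: "x \<in> S"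
    obtain h where h: "bij_betw h {..<card Y} Y"
      using ex_bij_betw_nat_finite[OF Y(1)] by (auto simp: atLeast0LessThan)
    have "x = x * (\<Sum>y\<in>Y. c y * y)" using c(1) by simp
    also have "\<dots> = (\<Sum>y\<in>Y. (x * y) * c y)" by (simp add: sum_distrib_left ac_simps)
    also have "\<dots> = (\<Sum>i<card Y. (x * h i) * c (h i))"
      using sum.reindex_bij_betw[OF h, of "\<lambda>y. (x * y) * c y"] by simp
    finally have x_eq: "x = (\<Sum>i<card Y. (x * h i) * c (h i))" .
    have "\<forall>i<card Y. x * h i \<in> ?I \<and> c (h i) \<in> J"
      using gen_module_mult[OF S Y(1) _ x] c(2) bij_betwE[OF h] unfolding J_def by blast
    then show "x \<in> ideal_mult ?I J"
      unfolding ideal_mult_def mem_Collect_eq using x_eq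
      by (intro exI[of _ "card Y"] exI[of _ "\<lambda>i. x * h i"] exI[of _ "\<lambda>i. c (h i)"] conjI)
  qed
  then have "ideal_mult ?I J = S" using ideal_mult_colon_subset[OF S] unfolding J_def by blast
  then show ?thesis unfolding invertible_ideal_def using gen_module_submodule[OF S] J by blast
qed

section \<open>The least ring with all S Y invertible\<close>

lemma one_splits_witness:
  fixes g :: "'a::field_char_0"
  assumes K: "number_field TYPE('a)" and g: "g \<noteq> 0"
  obtains v where "int_integral v" and "int_integral (v * g)" and "int_integral ((1 + v) * inverse g)"
    and "\<And>S. is_subring S \<Longrightarrow> one_splits S g \<Longrightarrow> v \<in> S \<and> v * g \<in> S \<and> (1 + v) * inverse g \<in> S"
proof -
  obtain c :: "nat \<Rightarrow> 'a" and n where c: "rat_basis c n" using number_field_rat_basis[OF K] .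
  obtain a e where "(\<Sum>i\<le>n. of_int (a i) * g ^ i) = 0" and "(\<Sum>i\<le>n. e i * a i) = 1"
    using rat_basis_primitive_relation[OF c] .
  then interpret primitive_int_relation g a n e using g by unfold_locales
  show ?thesis
  proof (rule that[OF splitter_int_integral])
    fix S assume S: "is_subring S" and "one_splits S g"
    then obtain b where "b \<in> S" "b * g \<in> S" "(1 - b) * inverse g \<in> S" unfolding one_splits_def by blast
    then show "splitter \<in> S \<and> splitter * g \<in> S \<and> (1 + splitter) * inverse g \<in> S"
      using splitter_mem[OF S] by blast
  qed
qed

lemma invertible_gen_modules_iff_one_splits:
  assumes S: "is_subring S" and G: "mult_subgroup G"
  shows "(\<forall>Y. finite Y \<and> Y \<noteq> {} \<and> Y \<subseteq> G \<longrightarrow> invertible_ideal S (gen_module S Y)) \<longleftrightarrow>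
    (\<forall>g\<in>G. one_splits S g)"
proof
  assume inv: "\<forall>Y. finite Y \<and> Y \<noteq> {} \<and> Y \<subseteq> G \<longrightarrow> invertible_ideal S (gen_module S Y)"
  show "\<forall>g\<in>G. one_splits S g"
  proof
    fix g assume "g \<in> G"
    then have "g \<noteq> 0" and "{1, g} \<subseteq> G" using G unfolding mult_subgroup_def by auto
    then have "invertible_ideal S (gen_module S {1, g})" using inv by simp
    then show "one_splits S g" by (rule invertible_pair_one_splits[OF S \<open>g \<noteq> 0\<close>])
  qed
next
  assume "\<forall>g\<in>G. one_splits S g"
  then show "\<forall>Y. finite Y \<and> Y \<noteq> {} \<and> Y \<subseteq> G \<longrightarrow> invertible_ideal S (gen_module S Y)"
    using one_splits_invertible[OF S G] by simp
qed

lemma least_one_splits_subring: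
  fixes G :: "'a::field_char_0 set"
  assumes K: "number_field TYPE('a)" and G: "\<And>g. g \<in> G \<Longrightarrow> g \<noteq> 0"
  obtains S0 where "is_subring S0" and "\<And>g. g \<in> G \<Longrightarrow> one_splits S0 g"
    and "\<And>S. is_subring S \<Longrightarrow> (\<And>g. g \<in> G \<Longrightarrow> one_splits S g) \<Longrightarrow> S0 \<subseteq> S"
    and "\<And>x. x \<in> S0 \<Longrightarrow> int_integral x"
proof -
  have "\<forall>g. \<exists>v. g \<in> G \<longrightarrow> int_integral v \<and> int_integral (v * g) \<and> int_integral ((1 + v) * inverse g) \<and>
      (\<forall>S. is_subring S \<and> one_splits S g \<longrightarrow> v \<in> S \<and> v * g \<in> S \<and> (1 + v) * inverse g \<in> S)"
    using one_splits_witness[OF K G] by metis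
  then obtain v where v: "\<And>g. g \<in> G \<Longrightarrow> int_integral (v g) \<and> int_integral (v g * g) \<and>
      int_integral ((1 + v g) * inverse g) \<and>
      (\<forall>S. is_subring S \<and> one_splits S g \<longrightarrow> v g \<in> S \<and> v g * g \<in> S \<and> (1 + v g) * inverse g \<in> S)"
    by metis
  define X where "X = (\<Union>g\<in>G. {v g, v g * g, (1 + v g) * inverse g})"
  define S0 where "S0 = \<Inter>{S. is_subring S \<and> X \<subseteq> S}"
  have S0: "is_subring S0" unfolding S0_def by (rule subring_Inter)
  show ?thesis
  proof (rule that[OF S0])
    fix g assume "g \<in> G"
    then have "v g \<in> S0" "v g * g \<in> S0" "(1 + v g) * inverse g \<in> S0" unfolding S0_def X_def by auto
    then show "one_splits S0 g"
      unfolding one_splits_def using subring_uminus[OF S0] by (intro bexI[of _ "- v g"]) auto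
  next
    fix S assume S: "is_subring S" and splits: "\<And>g. g \<in> G \<Longrightarrow> one_splits S g"
    have "v g \<in> S \<and> v g * g \<in> S \<and> (1 + v g) * inverse g \<in> S" if "g \<in> G" for g
      using v[OF that] splits[OF that] S by blast
    then have "X \<subseteq> S" unfolding X_def by auto
    then show "S0 \<subseteq> S" unfolding S0_def using S by blast
  next
    have "X \<subseteq> {y. int_integral y}" unfolding X_def using v by auto
    then show "int_integral x" if "x \<in> S0" for x
      using that subring_int_integral unfolding S0_def by blast
  qed
qed

theorem theorem4p70:
  fixes G :: "'a::field_char_0 set"
  assumes "number_field TYPE('a)"
    and "mult_subgroup G"
  defines "P \<equiv> \<lambda>S. is_subring S \<and>
             (\<forall>Y. finite Y \<and> Y \<noteq> {} \<and> Y \<subseteq> G \<longrightarrow> invertible_ideal S (gen_module S Y))"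
  shows "\<exists>S. (P S \<and> (\<forall>T. P T \<and> T \<subseteq> S \<longrightarrow> T = S)) \<and>
             (\<forall>S'. P S' \<and> (\<forall>T. P T \<and> T \<subseteq> S' \<longrightarrow> T = S') \<longrightarrow> S' = S) \<and>
             is_order S"
proof -
  have "g \<noteq> 0" if "g \<in> G" for g using assms(2) that unfolding mult_subgroup_def by auto
  then obtain S0 where S0: "is_subring S0" "\<And>g. g \<in> G \<Longrightarrow> one_splits S0 g"
    and least: "\<And>S. is_subring S \<Longrightarrow> (\<And>g. g \<in> G \<Longrightarrow> one_splits S g) \<Longrightarrow> S0 \<subseteq> S"
    and integral: "\<And>x. x \<in> S0 \<Longrightarrow> int_integral x"
    using least_one_splits_subring[OF assms(1)] by blast
  have P_iff: "P S \<longleftrightarrow> is_subring S \<and> (\<forall>g\<in>G. one_splits S g)" for S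
  proof (cases "is_subring S")
    case True
    then show ?thesis unfolding P_def using invertible_gen_modules_iff_one_splits[OF True assms(2)] by simp
  qed (simp add: P_def)
  have "P S0" using S0 unfolding P_iff by blast
  moreover have "S0 \<subseteq> S" if "P S" for S using that least[of S] unfolding P_iff by blast
  moreover have "is_order S0" by (rule integral_subring_is_order[OF assms(1) S0(1) integral])
  ultimately show ?thesis by blast
qed

end
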